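(* Let $\mu,\nu\in\mathcal P_1(\mathbb R^d)$ have a common barycentre and let $f:\mathbb R^d\to\mathbb R\cup\{+\infty\}$ be convex, lower semicontinuous and superlinear. If $\inf\{\int f\,d\rho:\rho\in\mathcal P_1(\mathbb R^d),\ \rho\succeq_c\mu,\ \rho\succeq_c\nu\}<+\infty$, then this infimum is attained (by a minimizer that is in general not unique).
   Context: Convex order: $\mu\preceq_c\rho$ (also $\rho\succeq_c\mu$) iff $\int\varphi\,d\mu\le\int\varphi\,d\rho$ for all convex $\varphi:\mathbb R^d\to\mathbb R$. $\mathcal P_1(\mathbb R^d)$: probability measures with finite first moment. *)

theory Defs
  imports "HOL-Probability.Probability"
begin

text \<open>For functions bounded below by an integrable function (e.g. convex
  functions against measures with finite first moment) this is the usual integral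
  with values in (-infinity, +infinity].\<close>
definition eint :: "'a measure \<Rightarrow> ('a \<Rightarrow> ereal) \<Rightarrow> ereal" where
  "eint M g = enn2ereal (\<integral>\<^sup>+ x. e2ennreal (g x) \<partial>M)
             - enn2ereal (\<integral>\<^sup>+ x. e2ennreal (- g x) \<partial>M)"

definition P1 :: "('a::euclidean_space) measure set" where
  "P1 = {\<rho>. sets \<rho> = sets borel \<and> prob_space \<rho> \<and> integrable \<rho> (\<lambda>x. norm x)}"

definition barycentre :: "('a::euclidean_space) measure \<Rightarrow> 'a" where
  "barycentre \<mu> = (\<integral> x. x \<partial>\<mu>)"

definition convex_le :: "('a::euclidean_space) measure \<Rightarrow> 'a measure \<Rightarrow> bool" where
  "convex_le \<mu> \<rho> \<longleftrightarrow>
     (\<forall>\<phi> :: 'a \<Rightarrow> real. convex_on UNIV \<phi> \<longrightarrow>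
        eint \<mu> (\<lambda>x. ereal (\<phi> x)) \<le> eint \<rho> (\<lambda>x. ereal (\<phi> x)))"

definition ereal_convex :: "('a::real_vector \<Rightarrow> ereal) \<Rightarrow> bool" where
  "ereal_convex f \<longleftrightarrow> convex {(x, r::real). f x \<le> ereal r}"

definition lsc :: "('a::topological_space \<Rightarrow> ereal) \<Rightarrow> bool" where
  "lsc f \<longleftrightarrow> (\<forall>x. f x \<le> Liminf (at x) f)"

definition superlinear :: "('a::real_normed_vector \<Rightarrow> ereal) \<Rightarrow> bool" where
  "superlinear f \<longleftrightarrow> ((\<lambda>x. f x / ereal (norm x)) \<longlongrightarrow> \<infinity>) at_infinity"

end

theory Submission
  imports Defs
begin

text \<open>The direct method of the calculus of variations. After adding a constant, \<open>f\<close> becomes a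
  nonnegative lower semicontinuous energy density \<open>g \<ge> norm\<close>, and \<open>\<rho> \<mapsto> \<integral>g d\<rho>\<close> is minimised
  over the common convex-order upper bounds of \<open>\<mu>\<close> and \<open>\<nu>\<close>. A minimising sequence has bounded
  first moments, so (Helly, Skorohod) a subsequence is realised by a.e. convergent random variables.
  Fatou's lemma for the lower semicontinuous \<open>g\<close> bounds the energy of the limit, and since the
  superlinear growth of \<open>g\<close> makes the sequence uniformly integrable, integrals of convex functions
  of linear growth pass to the limit; approximating an arbitrary convex test function from below by
  such functions shows that the limit is again a common convex-order upper bound.\<close>

section \<open>Lower semicontinuity and superlinear growth\<close>

lemma lsc_iff_eventually:
  "lsc f \<longleftrightarrow> (\<forall>x. \<forall>c<f x. \<forall>\<^sub>F y in at x. c < f y)"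
  unfolding lsc_def le_Liminf_iff by blast

lemma lsc_eventually_nhds:
  assumes "lsc f" "c < f x"
  shows "\<forall>\<^sub>F y in nhds x. c < f y"
  using assms by (auto simp: eventually_nhds_conv_at lsc_iff_eventually)

lemma lsc_tendsto:
  assumes "lsc f" "c < f x" "(X \<longlongrightarrow> x) F"
  shows "\<forall>\<^sub>F n in F. c < f (X n)"
  using eventually_compose_filterlim[OF lsc_eventually_nhds[OF assms(1,2)] assms(3)] .

lemma open_lsc_superlevel:
  assumes "lsc f"
  shows "open {x. c < f x}"
proof (subst open_subopen, intro ballI)
  fix x assume "x \<in> {x. c < f x}"
  then obtain T where "open T" "x \<in> T" "\<forall>y\<in>T. c < f y"
    using lsc_eventually_nhds[OF assms] unfolding eventually_nhds by blast
  then show "\<exists>T. open T \<and> x \<in> T \<and> T \<subseteq> {x. c < f x}" by blast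
qed

lemma borel_measurable_lsc:
  fixes f :: "'a::topological_space \<Rightarrow> ereal"
  assumes "lsc f"
  shows "f \<in> borel_measurable borel"
  by (rule borel_measurableI_greater) (simp add: open_lsc_superlevel[OF assms])

lemma lsc_add_continuous:
  fixes f :: "'a::topological_space \<Rightarrow> ereal"
  assumes f: "lsc f" and \<psi>: "continuous_on UNIV \<psi>"
  shows "lsc (\<lambda>x. f x + ereal (\<psi> x))"
  unfolding lsc_iff_eventually
proof (intro allI impI)
  fix x c assume c: "c < f x + ereal (\<psi> x)"
  have \<psi>x: "(\<psi> \<longlongrightarrow> \<psi> x) (at x)"
    using \<psi> by (simp add: continuous_on_def)
  show "\<forall>\<^sub>F y in at x. c < f y + ereal (\<psi> y)"
  proof (cases c)
    case MInf
    then have "-\<infinity> < f x" using c by auto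
    then have "\<forall>\<^sub>F y in at x. -\<infinity> < f y" using f unfolding lsc_iff_eventually by blast
    then show ?thesis by eventually_elim (use MInf in auto)
  next
    case (real r)
    then have "ereal (r - \<psi> x) < f x" using c by (cases "f x") auto
    then obtain d where d: "r - \<psi> x < d" "ereal d < f x" by (metis ereal_dense2 less_ereal.simps(1))
    have "\<forall>\<^sub>F y in at x. ereal d < f y" using f d(2) by (simp add: lsc_iff_eventually)
    moreover have "\<forall>\<^sub>F y in at x. r - d < \<psi> y" using order_tendstoD(1)[OF \<psi>x] d(1) by simp
    ultimately show ?thesis
    proof eventually_elim
      case (elim y)
      then show ?case using real by (cases "f y") auto
    qed
  qed (use c in simp)
qed

lemma lsc_bounded_below_on_compact:
  fixes f :: "'a::topological_space \<Rightarrow> ereal"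
  assumes "lsc f" "\<forall>x. f x \<noteq> -\<infinity>" "compact K"
  obtains b where "\<And>x. x \<in> K \<Longrightarrow> ereal b < f x"
proof -
  have "K \<subseteq> (\<Union>n. {x. ereal (- real n) < f x})"
  proof
    fix x
    obtain n :: nat where "- real_of_ereal (f x) < real n"
      using reals_Archimedean2 by blast
    then have "ereal (- real n) < f x" using assms(2) by (cases "f x") auto
    then show "x \<in> (\<Union>n. {x. ereal (- real n) < f x})" by blast
  qed
  then obtain N where N: "finite N" "K \<subseteq> (\<Union>n\<in>N. {x. ereal (- real n) < f x})"
    using compactE_image[OF assms(3) open_lsc_superlevel[OF assms(1)]] by metis
  have "ereal (- real (Max (insert 0 N))) < f x" if x: "x \<in> K" for x
  proof -
    obtain n where n: "n \<in> N" "ereal (- real n) < f x" using x N(2) by blast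
    have "ereal (- real (Max (insert 0 N))) \<le> ereal (- real n)" using N(1) n(1) by simp
    then show ?thesis using n(2) by (rule order.strict_trans1)
  qed
  then show thesis by (rule that)
qed

lemma superlinearD:
  assumes "superlinear f"
  obtains R where "R > 0" "\<And>x. R \<le> norm x \<Longrightarrow> ereal (M * norm x) \<le> f x"
proof -
  have "\<forall>\<^sub>F x in at_infinity. ereal M < f x / ereal (norm x)"
    using assms unfolding superlinear_def tendsto_PInfty by blast
  then obtain b where b: "\<And>x. b \<le> norm x \<Longrightarrow> ereal M < f x / ereal (norm x)"
    unfolding eventually_at_infinity by blast
  have "ereal (M * norm x) \<le> f x" if x: "max b 1 \<le> norm x" for x
  proof -
    have "ereal M < f x / ereal (norm x)" "norm x > 0" using b x by auto
    then have "ereal M * ereal (norm x) < f x"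
      by (simp add: ereal_less_divide_pos mult.commute)
    then show ?thesis by simp
  qed
  then show thesis by (intro that[of "max b 1"]) auto
qed

lemma superlinear_mono:
  assumes "superlinear f" "\<And>x. f x \<le> g x"
  shows "superlinear g"
  unfolding superlinear_def tendsto_PInfty
proof
  fix r :: real
  have "\<forall>\<^sub>F x in at_infinity. ereal r < f x / ereal (norm x)"
    using assms(1) unfolding superlinear_def tendsto_PInfty by blast
  moreover have "\<forall>\<^sub>F x in at_infinity. 0 < norm x"
    unfolding eventually_at_infinity by (auto intro!: exI[of _ 1])
  ultimately show "\<forall>\<^sub>F x in at_infinity. ereal r < g x / ereal (norm x)"
    by eventually_elim (use assms(2) in \<open>meson ereal_divide_right_mono ereal_less(2) less_le_trans\<close>)
qed

lemma superlinear_dominates_linear_growth: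
  assumes "superlinear g" "\<And>x. 0 \<le> g x" and \<psi>: "\<And>x. \<psi> x \<le> a + L * norm x"
  obtains K where "\<And>x. ereal (\<psi> x) \<le> g x + ereal K"
proof -
  obtain R where R: "R > 0" "\<And>x. R \<le> norm x \<Longrightarrow> ereal (L * norm x) \<le> g x"
    using superlinearD[OF assms(1)] by blast
  have "ereal (\<psi> x) \<le> g x + ereal (\<bar>a\<bar> + \<bar>L\<bar> * R)" for x
  proof (cases "R \<le> norm x")
    case True
    have "0 \<le> \<bar>L\<bar> * R" using R(1) by simp
    then have "\<psi> x \<le> L * norm x + (\<bar>a\<bar> + \<bar>L\<bar> * R)" using \<psi>[of x] abs_ge_self[of a] by linarith
    then show ?thesis using R(2)[OF True] by (cases "g x") auto
  next
    case False
    have "L * norm x \<le> \<bar>L\<bar> * norm x" by (simp add: mult_right_mono)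
    also have "\<dots> \<le> \<bar>L\<bar> * R" using False by (simp add: mult_left_mono)
    finally have "L * norm x \<le> \<bar>L\<bar> * R" .
    then have "\<psi> x \<le> \<bar>a\<bar> + \<bar>L\<bar> * R" using \<psi>[of x] by linarith
    then show ?thesis using assms(2)[of x] by (cases "g x") auto
  qed
  then show thesis by (rule that)
qed

lemma lsc_superlinear_ge_norm_minus_const:
  fixes f :: "'a::euclidean_space \<Rightarrow> ereal"
  assumes "lsc f" "superlinear f" "\<forall>x. f x \<noteq> -\<infinity>"
  obtains C where "0 \<le> C" "\<And>x. ereal (norm x - C) \<le> f x"
proof -
  obtain R where R: "R > 0" "\<And>x. R \<le> norm x \<Longrightarrow> ereal (1 * norm x) \<le> f x"
    using superlinearD[OF assms(2)] by blast
  obtain b where b: "\<And>x. x \<in> cball 0 R \<Longrightarrow> ereal b < f x"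
    using lsc_bounded_below_on_compact[OF assms(1,3) compact_cball] by blast
  have "ereal (norm x - (R + \<bar>b\<bar>)) \<le> f x" for x
  proof (cases "R \<le> norm x")
    case True
    then show ?thesis using R order.trans[OF _ R(2)] by fastforce
  next
    case False
    then have "ereal (norm x - (R + \<bar>b\<bar>)) \<le> ereal b" by simp
    also have "\<dots> \<le> f x" using b[of x] False by simp
    finally show ?thesis .
  qed
  then show thesis using R(1) by (intro that[of "R + \<bar>b\<bar>"]) auto
qed

section \<open>Integrals of extended real functions and the space \<open>P1\<close>\<close>

lemma e2ennreal_split_at_lower_bound:
  assumes "ereal w \<le> h"
  shows "e2ennreal h + ennreal (- w) = e2ennreal (h - ereal w) + e2ennreal (- h) + ennreal w"
proof (cases h)
  case (real r)
  with assms have "w \<le> r" by simp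
  then show ?thesis using real
    by (cases "0 \<le> r"; cases "0 \<le> w")
       (simp_all add: ennreal_neg ennreal_plus[symmetric] del: ennreal_plus)
qed (use assms in simp_all)

lemma enn2ereal_finite: "(N::ennreal) < \<infinity> \<Longrightarrow> enn2ereal N = ereal (enn2real N)"
  by (cases N rule: ennreal_cases) auto

lemma eint_eq_nn_integral_diff:
  fixes h :: "'b \<Rightarrow> ereal" and w :: "'b \<Rightarrow> real"
  assumes h[measurable]: "h \<in> borel_measurable M" and w: "integrable M w"
    and le: "\<And>x. x \<in> space M \<Longrightarrow> ereal (w x) \<le> h x"
  shows "eint M h = enn2ereal (\<integral>\<^sup>+ x. e2ennreal (h x - ereal (w x)) \<partial>M) + ereal (\<integral>x. w x \<partial>M)"
proof -
  have [measurable]: "w \<in> borel_measurable M" using w by auto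
  define P where "P = (\<integral>\<^sup>+ x. e2ennreal (h x) \<partial>M)"
  define N where "N = (\<integral>\<^sup>+ x. e2ennreal (- h x) \<partial>M)"
  define D where "D = (\<integral>\<^sup>+ x. e2ennreal (h x - ereal (w x)) \<partial>M)"
  define Wp where "Wp = (\<integral>\<^sup>+ x. ennreal (w x) \<partial>M)"
  define Wm where "Wm = (\<integral>\<^sup>+ x. ennreal (- w x) \<partial>M)"
  have "P + Wm = (\<integral>\<^sup>+ x. e2ennreal (h x) + ennreal (- w x) \<partial>M)"
    unfolding P_def Wm_def by (rule nn_integral_add[symmetric]) auto
  also have "\<dots> = (\<integral>\<^sup>+ x. e2ennreal (h x - ereal (w x)) + e2ennreal (- h x) + ennreal (w x) \<partial>M)"
    by (rule nn_integral_cong) (simp add: e2ennreal_split_at_lower_bound le)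
  also have "\<dots> = D + N + Wp"
    unfolding D_def N_def Wp_def by (simp add: nn_integral_add)
  finally have parts: "P + Wm = D + N + Wp" .
  have norm_w: "(\<integral>\<^sup>+x. ennreal (norm (w x)) \<partial>M) < \<infinity>"
    using w by (simp add: integrable_iff_bounded)
  have Wp: "Wp < \<infinity>" unfolding Wp_def
    by (rule le_less_trans[OF nn_integral_mono norm_w]) (simp add: ennreal_leI)
  have Wm: "Wm < \<infinity>" unfolding Wm_def
    by (rule le_less_trans[OF nn_integral_mono norm_w]) (simp add: ennreal_leI)
  have "N \<le> Wm" unfolding N_def Wm_def
  proof (rule nn_integral_mono)
    fix x assume "x \<in> space M"
    then have "- h x \<le> ereal (- w x)" using le[of x] by (cases "h x") auto
    then show "e2ennreal (- h x) \<le> ennreal (- w x)" using e2ennreal_mono by fastforce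
  qed
  with Wm have N: "N < \<infinity>" by simp
  have "enn2ereal P + ereal (enn2real Wm) = enn2ereal D + ereal (enn2real N) + ereal (enn2real Wp)"
    using arg_cong[OF parts, of enn2ereal]
    by (simp add: plus_ennreal.rep_eq enn2ereal_finite[OF Wm] enn2ereal_finite[OF N]
        enn2ereal_finite[OF Wp])
  then have "enn2ereal P - ereal (enn2real N) = enn2ereal D + ereal (enn2real Wp - enn2real Wm)"
    by (cases "enn2ereal P"; cases "enn2ereal D") auto
  moreover have "(\<integral>x. w x \<partial>M) = enn2real Wp - enn2real Wm"
    unfolding Wp_def Wm_def by (rule real_lebesgue_integral_def[OF w])
  ultimately show ?thesis
    unfolding eint_def P_def[symmetric] N_def[symmetric] D_def[symmetric] enn2ereal_finite[OF N] by simp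
qed

lemma eint_integrable:
  assumes "integrable M (w :: 'b \<Rightarrow> real)"
  shows "eint M (\<lambda>x. ereal (w x)) = ereal (\<integral>x. w x \<partial>M)"
  using eint_eq_nn_integral_diff[OF _ assms, of "\<lambda>x. ereal (w x)"] assms
  by (simp add: zero_ennreal.rep_eq)

lemma eint_nonneg:
  assumes "\<And>x. x \<in> space M \<Longrightarrow> 0 \<le> h x"
  shows "eint M h = enn2ereal (\<integral>\<^sup>+ x. e2ennreal (h x) \<partial>M)"
proof -
  have "(\<integral>\<^sup>+ x. e2ennreal (- h x) \<partial>M) = (\<integral>\<^sup>+ x. 0 \<partial>M)"
    by (rule nn_integral_cong) (use assms in \<open>simp add: e2ennreal_neg\<close>)
  then show ?thesis unfolding eint_def by (simp add: zero_ennreal.rep_eq)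
qed

lemma eint_eq_nn_integral_add_const:
  assumes "prob_space M" "h \<in> borel_measurable M" "\<And>x. x \<in> space M \<Longrightarrow> ereal (- c) \<le> h x"
  shows "eint M h = enn2ereal (\<integral>\<^sup>+ x. e2ennreal (h x + ereal c) \<partial>M) - ereal c"
proof -
  interpret prob_space M by fact
  have "h x - ereal (- c) = h x + ereal c" for x by (cases "h x") auto
  then show ?thesis
    using eint_eq_nn_integral_diff[OF assms(2), of "\<lambda>_. - c"] assms(3) prob_space
    by (simp add: minus_ereal_def)
qed

lemma nn_integral_add_integrable:
  fixes h :: "'b \<Rightarrow> ereal" and w :: "'b \<Rightarrow> real"
  assumes [measurable]: "h \<in> borel_measurable M" and w: "integrable M w"
    and h: "\<And>x. x \<in> space M \<Longrightarrow> 0 \<le> h x"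
    and hw: "\<And>x. x \<in> space M \<Longrightarrow> 0 \<le> h x + ereal (w x)"
  shows "enn2ereal (\<integral>\<^sup>+ x. e2ennreal (h x + ereal (w x)) \<partial>M)
       = enn2ereal (\<integral>\<^sup>+ x. e2ennreal (h x) \<partial>M) + ereal (\<integral>x. w x \<partial>M)"
proof -
  have [measurable]: "w \<in> borel_measurable M" using w by auto
  have "h x + ereal (w x) - ereal (w x) = h x" for x by (cases "h x") auto
  then have "eint M (\<lambda>x. h x + ereal (w x))
      = enn2ereal (\<integral>\<^sup>+ x. e2ennreal (h x) \<partial>M) + ereal (\<integral>x. w x \<partial>M)"
    using eint_eq_nn_integral_diff[OF _ w, of "\<lambda>x. h x + ereal (w x)"] h
    by (simp add: add_increasing)
  then show ?thesis using eint_nonneg[of M "\<lambda>x. h x + ereal (w x)"] hw by simp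
qed

lemma eint_monotone_convergence:
  fixes \<psi> :: "nat \<Rightarrow> 'b \<Rightarrow> real"
  assumes [measurable]: "\<phi> \<in> borel_measurable M" and int: "\<And>n. integrable M (\<psi> n)"
    and mono: "\<And>n x. \<psi> n x \<le> \<psi> (Suc n) x" and lim: "\<And>x. (\<lambda>n. \<psi> n x) \<longlonglongrightarrow> \<phi> x"
  shows "(\<lambda>n. ereal (\<integral>x. \<psi> n x \<partial>M)) \<longlonglongrightarrow> eint M (\<lambda>x. ereal (\<phi> x))"
proof -
  have [measurable]: "\<psi> n \<in> borel_measurable M" for n using int by auto
  have mono': "\<psi> m x \<le> \<psi> n x" if "m \<le> n" for m n x
    using lift_Suc_mono_le[of "\<lambda>n. \<psi> n x", OF mono that] .
  have above_\<psi>0: "\<psi> 0 x \<le> \<phi> x" for x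
    by (rule LIMSEQ_le_const[OF lim]) (use mono' in auto)
  define \<Delta> where "\<Delta> u = enn2ereal (\<integral>\<^sup>+ x. ennreal (u x - \<psi> 0 x) \<partial>M) + ereal (\<integral>x. \<psi> 0 x \<partial>M)" for u
  have shift: "eint M (\<lambda>x. ereal (u x)) = \<Delta> u"
    if [measurable]: "u \<in> borel_measurable M" and "\<And>x. \<psi> 0 x \<le> u x" for u
    using eint_eq_nn_integral_diff[OF _ int[of 0], of "\<lambda>x. ereal (u x)"] that unfolding \<Delta>_def
    by simp
  have "incseq (\<lambda>n x. ennreal (\<psi> n x - \<psi> 0 x))"
    by (auto simp: incseq_def le_fun_def mono' intro!: ennreal_leI)
  then have "(\<lambda>n. \<integral>\<^sup>+ x. ennreal (\<psi> n x - \<psi> 0 x) \<partial>M) \<longlonglongrightarrow> (\<integral>\<^sup>+ x. ennreal (\<phi> x - \<psi> 0 x) \<partial>M)"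
    by (rule nn_integral_LIMSEQ) (auto intro!: tendsto_ennrealI tendsto_diff lim)
  then have "(\<lambda>n. \<Delta> (\<psi> n)) \<longlonglongrightarrow> \<Delta> \<phi>"
    unfolding \<Delta>_def by (intro tendsto_add_ereal_general1 tendsto_enn2erealI tendsto_const) simp_all
  moreover have "\<Delta> (\<psi> n) = ereal (\<integral>x. \<psi> n x \<partial>M)" for n
    using shift[of "\<psi> n"] mono'[of 0 n] eint_integrable[OF int[of n]] by simp
  moreover have "\<Delta> \<phi> = eint M (\<lambda>x. ereal (\<phi> x))"
    using shift[of \<phi>] above_\<psi>0 by simp
  ultimately show ?thesis by simp
qed

lemma P1D:
  assumes "M \<in> P1"
  shows "sets M = sets borel" "prob_space M" "integrable M (\<lambda>x. norm x)"
  using assms unfolding P1_def by auto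

lemma borel_measurable_P1:
  assumes "M \<in> P1" "g \<in> borel_measurable borel"
  shows "g \<in> borel_measurable M"
  using assms(2) by (subst measurable_cong_sets[OF P1D(1)[OF assms(1)] refl])

lemma integrable_P1_linear_growth:
  fixes \<psi> :: "'a::euclidean_space \<Rightarrow> real"
  assumes M: "M \<in> P1" and [measurable]: "\<psi> \<in> borel_measurable borel"
    and growth: "\<And>x. \<bar>\<psi> x\<bar> \<le> a + L * norm x"
  shows "integrable M \<psi>"
proof (rule Bochner_Integration.integrable_bound)
  interpret prob_space M using P1D(2)[OF M] .
  show "integrable M (\<lambda>x. \<bar>a\<bar> + \<bar>L\<bar> * norm x)"
    using P1D(3)[OF M] by (intro Bochner_Integration.integrable_add integrable_mult_right) auto
  show "\<psi> \<in> borel_measurable M" using M by (simp add: borel_measurable_P1)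
  have "\<bar>\<psi> x\<bar> \<le> \<bar>a\<bar> + \<bar>L\<bar> * norm x" for x
    using growth[of x] abs_ge_self[of a] mult_right_mono[OF abs_ge_self[of L] norm_ge_zero[of x]]
    by linarith
  then show "AE x in M. norm (\<psi> x) \<le> norm (\<bar>a\<bar> + \<bar>L\<bar> * norm x)" by (intro AE_I2) simp
qed

section \<open>Lipschitz approximation of convex functions\<close>

lemma convex_on_lower_linear_bound:
  fixes \<phi> :: "'a::euclidean_space \<Rightarrow> real"
  assumes cv: "convex_on UNIV \<phi>"
  obtains a k where "0 \<le> k" "\<And>x. - a - k * norm x \<le> \<phi> x"
proof -
  have "bounded (\<phi> ` cball 0 1)"
    using convex_on_continuous[OF open_UNIV cv]
    by (intro compact_imp_bounded compact_continuous_image) (auto intro: continuous_on_subset)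
  then obtain b where "\<forall>z\<in>\<phi> ` cball 0 1. \<bar>z\<bar> \<le> b" unfolding bounded_real by blast
  then have b: "\<And>y. norm y \<le> 1 \<Longrightarrow> \<bar>\<phi> y\<bar> \<le> b" by auto
  have b0: "0 \<le> b" "- b \<le> \<phi> 0" using b[of 0] by auto
  have "- b - 2 * b * norm x \<le> \<phi> x" for x
  proof (cases "norm x \<le> 1")
    case True
    then have "- b \<le> \<phi> x" using b[of x] by simp
    moreover have "0 \<le> 2 * b * norm x" using b0 by simp
    ultimately show ?thesis by linarith
  next
    case False
    define t where "t = norm x"
    define y where "y = (- 1 / t) *\<^sub>R x"
    have t: "1 < t" using False t_def by simp
    have "x \<noteq> 0" using t t_def by auto
    then have "norm y = 1" unfolding y_def t_def by simp
    have "(t / (1 + t)) *\<^sub>R y = - ((1 / (1 + t)) *\<^sub>R x)"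
      using t by (simp add: y_def)
    then have "(1 - t / (1 + t)) *\<^sub>R x + (t / (1 + t)) *\<^sub>R y = 0"
      using t by (simp add: diff_divide_eq_iff)
    then have "\<phi> 0 \<le> (1 - t / (1 + t)) * \<phi> x + (t / (1 + t)) * \<phi> y"
      using convex_onD[OF cv, of "t / (1 + t)" x y] t by simp
    also have "\<dots> = (\<phi> x + t * \<phi> y) / (1 + t)"
      using t by (simp add: diff_divide_eq_iff add_divide_distrib)
    finally have "(1 + t) * \<phi> 0 \<le> \<phi> x + t * \<phi> y"
      using t by (simp add: pos_le_divide_eq mult.commute)
    moreover have "t * \<phi> y \<le> t * b" using b[of y] \<open>norm y = 1\<close> t by simp
    moreover have "(1 + t) * (- b) \<le> (1 + t) * \<phi> 0" using b0 t by (intro mult_left_mono) auto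
    ultimately show ?thesis unfolding t_def[symmetric] by (simp add: algebra_simps)
  qed
  then show thesis using b0 by (intro that[of "2 * b" b]) auto
qed

lemma le_weighted_sum_INF:
  fixes F G :: "'a \<Rightarrow> real"
  assumes "0 < u" "0 < v" "\<And>y z. A \<le> u * F y + v * G z"
  shows "A \<le> u * (INF y. F y) + v * (INF z. G z)"
proof -
  have "(A - u * (INF y. F y)) / v \<le> G z" for z
  proof -
    have "(A - v * G z) / u \<le> (INF y. F y)"
      by (rule cINF_greatest) (use assms in \<open>auto simp: field_simps\<close>)
    then show ?thesis using assms(1,2) by (simp add: field_simps)
  qed
  then have "(A - u * (INF y. F y)) / v \<le> (INF z. G z)" by (intro cINF_greatest) auto
  then show ?thesis using assms(2) by (simp add: field_simps)
qed

text \<open>The Pasch--Hausdorff envelope; it is the largest \<open>K\<close>-Lipschitz minorant of \<open>\<phi>\<close> if there is one.\<close>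
definition lipschitz_envelope :: "real \<Rightarrow> ('a::real_normed_vector \<Rightarrow> real) \<Rightarrow> 'a \<Rightarrow> real" where
  "lipschitz_envelope K \<phi> x = (INF y. \<phi> y + K * norm (x - y))"

context
  fixes \<phi> :: "'a::real_normed_vector \<Rightarrow> real" and a k K :: real
  assumes lower: "\<And>x. - a - k * norm x \<le> \<phi> x" and k: "0 \<le> k" "k \<le> K"
begin

lemma lipschitz_envelope_le: "lipschitz_envelope K \<phi> x \<le> \<phi> y + K * norm (x - y)"
proof -
  have "- a - k * norm x \<le> \<phi> z + K * norm (x - z)" for z
  proof -
    have "norm z \<le> norm x + norm (x - z)"
      using norm_triangle_sub[of z x] by (simp add: norm_minus_commute)
    then have "k * norm z \<le> k * norm x + k * norm (x - z)"
      using k(1) by (metis distrib_left mult_left_mono)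
    moreover have "k * norm (x - z) \<le> K * norm (x - z)" using k(2) by (simp add: mult_right_mono)
    ultimately show ?thesis using lower[of z] by linarith
  qed
  then have "bdd_below (range (\<lambda>z. \<phi> z + K * norm (x - z)))" by (intro bdd_belowI2) blast
  then show ?thesis unfolding lipschitz_envelope_def by (rule cINF_lower) simp
qed

lemma lipschitz_envelope_lipschitz:
  "\<bar>lipschitz_envelope K \<phi> x - lipschitz_envelope K \<phi> x'\<bar> \<le> K * norm (x - x')"
proof -
  have "lipschitz_envelope K \<phi> x - K * norm (x - x') \<le> lipschitz_envelope K \<phi> x'" for x x'
    unfolding lipschitz_envelope_def[of K \<phi> x']
  proof (rule cINF_greatest)
    fix y
    have "norm (x - y) \<le> norm (x - x') + norm (x' - y)"
      using norm_triangle_ineq[of "x - x'" "x' - y"] by simp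
    then have "K * norm (x - y) \<le> K * norm (x - x') + K * norm (x' - y)"
      using k by (metis distrib_left mult_left_mono order_trans)
    then show "lipschitz_envelope K \<phi> x - K * norm (x - x') \<le> \<phi> y + K * norm (x' - y)"
      using lipschitz_envelope_le[of x y] by linarith
  qed simp
  from this[of x x'] this[of x' x] show ?thesis by (simp add: abs_le_iff norm_minus_commute)
qed

lemma convex_on_lipschitz_envelope:
  assumes "convex_on UNIV \<phi>"
  shows "convex_on UNIV (lipschitz_envelope K \<phi>)"
proof (rule convex_onI)
  fix t :: real and x1 x2 :: 'a assume t: "0 < t" "t < 1"
  define z where "z = (1 - t) *\<^sub>R x1 + t *\<^sub>R x2"
  have "lipschitz_envelope K \<phi> z
      \<le> (1 - t) * (\<phi> y1 + K * norm (x1 - y1)) + t * (\<phi> y2 + K * norm (x2 - y2))" for y1 y2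
  proof -
    define y where "y = (1 - t) *\<^sub>R y1 + t *\<^sub>R y2"
    have "\<phi> y \<le> (1 - t) * \<phi> y1 + t * \<phi> y2"
      unfolding y_def by (rule convex_onD[OF assms]) (use t in auto)
    moreover have "z - y = (1 - t) *\<^sub>R (x1 - y1) + t *\<^sub>R (x2 - y2)"
      unfolding z_def y_def by (simp add: algebra_simps)
    then have "norm (z - y) \<le> (1 - t) * norm (x1 - y1) + t * norm (x2 - y2)"
      using t by (metis abs_of_pos diff_gt_0_iff_gt norm_scaleR norm_triangle_ineq)
    then have "K * norm (z - y) \<le> K * ((1 - t) * norm (x1 - y1) + t * norm (x2 - y2))"
      using k by (intro mult_left_mono) auto
    moreover have "(1 - t) * (\<phi> y1 + K * norm (x1 - y1)) + t * (\<phi> y2 + K * norm (x2 - y2))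
        = (1 - t) * \<phi> y1 + t * \<phi> y2 + K * ((1 - t) * norm (x1 - y1) + t * norm (x2 - y2))"
      by (simp add: algebra_simps)
    ultimately show ?thesis using lipschitz_envelope_le[of z y] by linarith
  qed
  then show "lipschitz_envelope K \<phi> ((1 - t) *\<^sub>R x1 + t *\<^sub>R x2)
      \<le> (1 - t) * lipschitz_envelope K \<phi> x1 + t * lipschitz_envelope K \<phi> x2"
    unfolding z_def lipschitz_envelope_def[of K \<phi> x1] lipschitz_envelope_def[of K \<phi> x2]
    by (intro le_weighted_sum_INF) (use t in auto)
qed simp

lemma lipschitz_envelope_mono:
  assumes "K \<le> K'"
  shows "lipschitz_envelope K \<phi> x \<le> lipschitz_envelope K' \<phi> x"
  unfolding lipschitz_envelope_def[of K']
proof (rule cINF_greatest)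
  fix y
  show "lipschitz_envelope K \<phi> x \<le> \<phi> y + K' * norm (x - y)"
    using lipschitz_envelope_le[of x y] mult_right_mono[OF assms norm_ge_zero[of "x - y"]] by linarith
qed simp

end

lemma lipschitz_envelope_tendsto:
  fixes \<phi> :: "'a::real_normed_vector \<Rightarrow> real"
  assumes lower: "\<And>x. - a - k * norm x \<le> \<phi> x" and k: "0 \<le> k" and cont: "isCont \<phi> x"
  shows "(\<lambda>n. lipschitz_envelope (k + real n) \<phi> x) \<longlonglongrightarrow> \<phi> x"
proof (rule LIMSEQ_I)
  fix e :: real assume e: "e > 0"
  obtain d where d: "d > 0" "\<And>y. dist y x < d \<Longrightarrow> \<bar>\<phi> y - \<phi> x\<bar> < e / 2"
    using cont[unfolded continuous_at_eps_delta, rule_format, of "e / 2"] e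
    by (auto simp: dist_real_def)
  obtain N :: nat where N: "(\<phi> x + a + k * norm x) / d < real N"
    using reals_Archimedean2 by blast
  text \<open>Far from \<open>x\<close> the penalty \<open>(k + n) * norm (x - y)\<close> beats the linear lower bound of \<open>\<phi>\<close>.\<close>
  have lo: "\<phi> x - e / 2 \<le> lipschitz_envelope (k + real n) \<phi> x" if n: "N \<le> n" for n
    unfolding lipschitz_envelope_def
  proof (rule cINF_greatest)
    fix y
    show "\<phi> x - e / 2 \<le> \<phi> y + (k + real n) * norm (x - y)"
    proof (cases "dist y x < d")
      case True
      then have "\<phi> x - e / 2 < \<phi> y" using d(2)[OF True] by linarith
      moreover have "0 \<le> (k + real n) * norm (x - y)" using k by simp
      ultimately show ?thesis by linarith
    next
      case False
      then have dy: "d \<le> norm (x - y)" by (simp add: dist_norm norm_minus_commute)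
      have "norm y \<le> norm x + norm (x - y)"
        using norm_triangle_sub[of y x] by (simp add: norm_minus_commute)
      then have "k * norm y \<le> k * norm x + k * norm (x - y)"
        using k by (metis distrib_left mult_left_mono)
      moreover have "real N * d \<le> real n * norm (x - y)"
        using n dy d(1) by (intro mult_mono) auto
      moreover have "\<phi> x + a + k * norm x < real N * d" using N d(1) by (simp add: field_simps)
      moreover have "(k + real n) * norm (x - y) = k * norm (x - y) + real n * norm (x - y)"
        by (rule distrib_right)
      ultimately show ?thesis using lower[of y] e by linarith
    qed
  qed simp
  have hi: "lipschitz_envelope (k + real n) \<phi> x \<le> \<phi> x" for n
    using lipschitz_envelope_le[OF lower, of "k + real n" x x] k by simp
  have "norm (lipschitz_envelope (k + real n) \<phi> x - \<phi> x) < e" if "N \<le> n" for n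
    using lo[OF that] hi[of n] e by simp
  then show "\<exists>N. \<forall>n\<ge>N. norm (lipschitz_envelope (k + real n) \<phi> x - \<phi> x) < e" by blast
qed

lemma convex_on_approx_lipschitz:
  fixes \<phi> :: "'a::euclidean_space \<Rightarrow> real"
  assumes cv: "convex_on UNIV \<phi>"
  obtains \<psi> :: "nat \<Rightarrow> 'a \<Rightarrow> real" and c L :: "nat \<Rightarrow> real" where
    "\<And>n. convex_on UNIV (\<psi> n)" "\<And>n. continuous_on UNIV (\<psi> n)"
    "\<And>n x. \<bar>\<psi> n x\<bar> \<le> c n + L n * norm x"
    "\<And>n x. \<psi> n x \<le> \<psi> (Suc n) x" "\<And>x. (\<lambda>n. \<psi> n x) \<longlonglongrightarrow> \<phi> x"
proof -
  obtain a k where k: "0 \<le> k" and lower: "\<And>x. - a - k * norm x \<le> \<phi> x"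
    using convex_on_lower_linear_bound[OF cv] by metis
  define \<psi> where "\<psi> n = lipschitz_envelope (k + real n) \<phi>" for n
  note env = lipschitz_envelope_lipschitz[OF lower k(1), of "k + real n" for n]
  have cont: "isCont \<phi> x" for x
    using convex_on_continuous[OF open_UNIV cv] by (simp add: continuous_on_eq_continuous_at)
  show thesis
  proof (rule that[of \<psi> "\<lambda>n. \<bar>\<psi> n 0\<bar>" "\<lambda>n. k + real n"])
    show "convex_on UNIV (\<psi> n)" for n
      unfolding \<psi>_def by (rule convex_on_lipschitz_envelope[OF lower k(1) _ cv]) simp
    show "continuous_on UNIV (\<psi> n)" for n
    proof (rule lipschitz_on_continuous_on[of "k + real n"], rule lipschitz_onI)
      show "dist (\<psi> n x) (\<psi> n y) \<le> (k + real n) * dist x y" for x y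
        using env[of n x y] by (simp add: \<psi>_def dist_real_def dist_norm)
    qed (use k in simp)
    show "\<bar>\<psi> n x\<bar> \<le> \<bar>\<psi> n 0\<bar> + (k + real n) * norm x" for n x
      using env[of n x 0] unfolding \<psi>_def by simp
    show "\<psi> n x \<le> \<psi> (Suc n) x" for n x
      unfolding \<psi>_def by (rule lipschitz_envelope_mono[OF lower k(1)]) simp_all
    show "(\<lambda>n. \<psi> n x) \<longlonglongrightarrow> \<phi> x" for x
      unfolding \<psi>_def by (rule lipschitz_envelope_tendsto[OF lower k(1) cont])
  qed
qed

section \<open>Compactness for bounded first moments\<close>

lemma borel_measurable_floor_mod:
  fixes f :: "'a \<Rightarrow> real"
  assumes "f \<in> borel_measurable M"
  shows "(\<lambda>x. real_of_int (\<lfloor>f x\<rfloor> mod c)) \<in> borel_measurable M"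
proof -
  have "(\<lambda>x. \<lfloor>f x\<rfloor>) \<in> M \<rightarrow>\<^sub>M count_space UNIV"
    using measurable_compose[OF assms measurable_real_floor] by simp
  moreover have "(\<lambda>z::int. real_of_int (z mod c)) \<in> count_space UNIV \<rightarrow>\<^sub>M borel" by simp
  ultimately show ?thesis using measurable_compose by blast
qed

definition bin_digit :: "real \<Rightarrow> nat \<Rightarrow> int" where
  "bin_digit u m = \<lfloor>2^(m+1) * u\<rfloor> mod 2"

lemma bin_digit_01: "bin_digit u m = 0 \<or> bin_digit u m = 1"
  unfolding bin_digit_def by auto

lemma floor_half: "\<lfloor>(x::real) / 2\<rfloor> = \<lfloor>x\<rfloor> div 2"
  using floor_divide_real_eq_div[of 2 x] by simp

lemma sum_bin_digits:
  assumes "0 \<le> u" "u < 1"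
  shows "(\<Sum>m<n. real_of_int (bin_digit u m) / 2^(m+1)) = real_of_int \<lfloor>2^n * u\<rfloor> / 2^n"
proof (induction n)
  case 0
  then show ?case using assms by (simp add: floor_eq_iff)
next
  case (Suc n)
  have "\<lfloor>2^n * u\<rfloor> = \<lfloor>2^(n+1) * u\<rfloor> div 2"
    using floor_half[of "2^(n+1) * u"] by simp
  then have eq: "\<lfloor>2^(n+1) * u\<rfloor> = 2 * \<lfloor>2^n * u\<rfloor> + bin_digit u n"
    unfolding bin_digit_def by simp
  have "(\<Sum>m<Suc n. real_of_int (bin_digit u m) / 2^(m+1))
      = real_of_int \<lfloor>2^n * u\<rfloor> / 2^n + real_of_int (bin_digit u n) / 2^(n+1)"
    using Suc by simp
  also have "\<dots> = (2 * real_of_int \<lfloor>2^n * u\<rfloor> + real_of_int (bin_digit u n)) / 2^(n+1)"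
    by (simp add: field_simps)
  also have "\<dots> = real_of_int \<lfloor>2^(Suc n) * u\<rfloor> / 2^(Suc n)"
    using arg_cong[OF eq, of real_of_int] by simp
  finally show ?case .
qed

lemma bin_digits_sums:
  assumes "0 \<le> u" "u < 1"
  shows "(\<lambda>m. real_of_int (bin_digit u m) / 2^(m+1)) sums u"
  unfolding sums_def
proof -
  have lo: "u - inverse (2^n) \<le> real_of_int \<lfloor>2^n * u\<rfloor> / 2^n" for n :: nat
  proof -
    have "2^n * u - 1 \<le> real_of_int \<lfloor>2^n * u\<rfloor>" by linarith
    then have "(2^n * u - 1) / 2^n \<le> real_of_int \<lfloor>2^n * u\<rfloor> / 2^n"
      by (simp add: divide_right_mono)
    moreover have "(2^n * u - 1) / 2^n = u - inverse (2^n::real)"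
      by (simp add: diff_divide_distrib inverse_eq_divide)
    ultimately show ?thesis by simp
  qed
  have hi: "real_of_int \<lfloor>2^n * u\<rfloor> / 2^n \<le> u" for n :: nat
  proof -
    have "real_of_int \<lfloor>2^n * u\<rfloor> \<le> 2^n * u" by linarith
    then show ?thesis by (simp add: divide_le_eq mult.commute)
  qed
  have t1: "(\<lambda>n. u - inverse (2^n::real)) \<longlonglongrightarrow> u - 0"
    by (intro tendsto_diff tendsto_const LIMSEQ_inverse_realpow_zero) auto
  have "(\<lambda>n. real_of_int \<lfloor>2^n * u\<rfloor> / 2^n) \<longlonglongrightarrow> u"
  proof (rule tendsto_sandwich[of "\<lambda>n. u - inverse (2^n)" _ _ "\<lambda>n. u"])
    show "\<forall>\<^sub>F n in sequentially. u - inverse (2 ^ n) \<le> real_of_int \<lfloor>2^n * u\<rfloor> / 2^n"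
      using lo by (intro always_eventually allI) 
    show "\<forall>\<^sub>F n in sequentially. real_of_int \<lfloor>2^n * u\<rfloor> / 2^n \<le> u"
      using hi by (intro always_eventually allI) 
    show "(\<lambda>n. u - inverse (2^n::real)) \<longlonglongrightarrow> u" using t1 by simp
  qed simp
  then show "(\<lambda>n. \<Sum>m<n. real_of_int (bin_digit u m) / 2^(m+1)) \<longlonglongrightarrow> u"
    using sum_bin_digits[OF assms] by simp
qed

definition quart_digit :: "real \<Rightarrow> nat \<Rightarrow> int" where
  "quart_digit s k = \<lfloor>4^(k+1) * s\<rfloor> mod 4"

lemma quart_term_le: "\<bar>x::real\<bar> \<le> 2 \<Longrightarrow> \<bar>x\<bar> / 4^(n+1) \<le> (1/2) * (1/4)^n"
proof -
  assume x: "\<bar>x\<bar> \<le> 2"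
  have "\<bar>x\<bar> / 4^(n+1) \<le> 2 / 4^(n+1)" by (rule divide_right_mono) (use x in auto)
  also have "2 / 4^(n+1) = (1/2) * (1/4::real)^n" by (simp add: power_one_over)
  finally show ?thesis .
qed

lemma summable_quart_series:
  assumes "\<And>k. a k \<in> {0, 2::int}"
  shows "summable (\<lambda>j. real_of_int (a j) / 4^(j+1))"
proof (rule summable_comparison_test)
  have "norm (real_of_int (a n) / 4^(n+1)) \<le> (1/2) * (1/4)^n" for n
  proof -
    have "\<bar>real_of_int (a n)\<bar> \<le> 2" using assms[of n] by auto
    then show ?thesis using quart_term_le by simp
  qed
  then show "\<exists>N. \<forall>n\<ge>N. norm (real_of_int (a n) / 4^(n+1)) \<le> (1/2) * (1/4)^n" by blast
  show "summable (\<lambda>n. (1/2) * (1/4::real)^n)" by (intro summable_mult summable_geometric) auto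
qed

lemma quart_series_bounds:
  assumes "\<And>k. a k \<in> {0, 2::int}"
  shows "0 \<le> (\<Sum>j. real_of_int (a j) / 4^(j+1))" "(\<Sum>j. real_of_int (a j) / 4^(j+1)) \<le> 2/3"
proof -
  have s: "summable (\<lambda>j. real_of_int (a j) / 4^(j+1))" by (rule summable_quart_series[OF assms])
  show "0 \<le> (\<Sum>j. real_of_int (a j) / 4^(j+1))"
  proof (rule suminf_nonneg[OF s])
    fix n have "a n \<ge> 0" using assms[of n] by auto
    then show "0 \<le> real_of_int (a n) / 4^(n+1)" by simp
  qed
  have g: "(\<lambda>j. (1/2) * (1/4::real)^j) sums ((1/2) * (1 / (1 - 1/4)))"
    by (intro sums_mult geometric_sums) auto
  have "(\<Sum>j. real_of_int (a j) / 4^(j+1)) \<le> (\<Sum>j. (1/2) * (1/4::real)^j)"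
  proof (intro suminf_le[OF _ s sums_summable[OF g]])
    fix n
    have "\<bar>real_of_int (a n)\<bar> \<le> 2" "a n \<ge> 0" using assms[of n] by auto
    then show "real_of_int (a n) / 4^(n+1) \<le> (1/2) * (1/4::real)^n"
      using quart_term_le[of "real_of_int (a n)" n] by simp
  qed
  also have "\<dots> = 2/3" using sums_unique[OF g] by simp
  finally show "(\<Sum>j. real_of_int (a j) / 4^(j+1)) \<le> 2/3" .
qed

lemma quart_digit_series:
  assumes a: "\<And>k. a k \<in> {0, 2::int}"
  defines "s \<equiv> (\<Sum>k. real_of_int (a k) / 4^(k+1))"
  shows "quart_digit s k = a k" "4^(k+1) * s - real_of_int \<lfloor>4^(k+1) * s\<rfloor> \<le> 2/3"
proof -
  define R where "R k = (\<Sum>j. real_of_int (a (j + k)) / 4^(j+1))" for k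
  have aR: "\<And>j. a (j + k) \<in> {0,2}" for k using a by blast
  have sumR: "summable (\<lambda>j. real_of_int (a (j + k)) / 4^(j+1))" for k
    by (rule summable_quart_series[OF aR])
  have Rb: "0 \<le> R k" "R k \<le> 2/3" for k unfolding R_def by (rule quart_series_bounds[OF aR])+
  have Rstep: "4 * R k = real_of_int (a k) + R (Suc k)" for k
  proof -
    have sm: "summable (\<lambda>j. real_of_int (a (j + k)) / 4^j)"
      using summable_mult[OF sumR[of k], of 4] by (simp add: field_simps)
    have "4 * R k = (\<Sum>j. real_of_int (a (j + k)) / 4^j)"
      unfolding R_def using suminf_mult[OF sumR[of k], of 4] by (simp add: field_simps)
    also have "\<dots> = real_of_int (a k) + (\<Sum>j. real_of_int (a (Suc j + k)) / 4^(Suc j))"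
      using suminf_split_head[OF sm] by simp
    also have "(\<Sum>j. real_of_int (a (Suc j + k)) / 4^(Suc j)) = R (Suc k)"
      unfolding R_def by (simp add: add.commute)
    finally show ?thesis .
  qed
  define Z where "Z = rec_nat (0::int) (\<lambda>k z. 4 * z + a k)"
  have Z0: "Z 0 = 0" and ZS: "Z (Suc k) = 4 * Z k + a k" for k unfolding Z_def by simp_all
  have main: "4^k * s = real_of_int (Z k) + R k" for k
  proof (induction k)
    case 0 then show ?case unfolding s_def R_def by (simp add: Z0)
  next
    case (Suc k)
    have "4^(Suc k) * s = 4 * (4^k * s)" by simp
    also have "\<dots> = 4 * real_of_int (Z k) + 4 * R k" using Suc by simp
    also have "\<dots> = real_of_int (Z (Suc k)) + R (Suc k)" using Rstep[of k] ZS[of k] by simp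
    finally show ?case .
  qed
  have fl: "\<lfloor>4^(k+1) * s\<rfloor> = Z (k+1)"
    using main[of "k+1"] Rb[of "k+1"] by (simp add: floor_eq_iff)
  show "quart_digit s k = a k"
    unfolding quart_digit_def fl using a[of k] by (auto simp: ZS)
  show "4^(k+1) * s - real_of_int \<lfloor>4^(k+1) * s\<rfloor> \<le> 2/3"
    unfolding fl using main[of "k+1"] Rb[of "k+1"] by simp
qed

definition basis_enum :: "nat \<Rightarrow> 'a::euclidean_space" where
  "basis_enum = (SOME g. bij_betw g {..<DIM('a)} Basis)"

lemma basis_enum_bij: "bij_betw (basis_enum :: nat \<Rightarrow> 'a) {..<DIM('a::euclidean_space)} Basis"
proof -
  have "\<exists>g. bij_betw g {..<DIM('a)} (Basis :: 'a set)"
    using ex_bij_betw_nat_finite[OF finite_Basis] by (simp add: atLeast0LessThan)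
  then show ?thesis unfolding basis_enum_def by (rule someI_ex)
qed

lemma basis_enum_in_Basis: "i < DIM('a::euclidean_space) \<Longrightarrow> (basis_enum i :: 'a) \<in> Basis"
  using basis_enum_bij bij_betwE by blast

lemma inner_basis_enum: "i < DIM('a::euclidean_space) \<Longrightarrow> j < DIM('a) \<Longrightarrow>
   (basis_enum i :: 'a) \<bullet> basis_enum j = (if i = j then 1 else 0)"
  using basis_enum_bij[where 'a='a] basis_enum_in_Basis[of i, where 'a='a]
    basis_enum_in_Basis[of j, where 'a='a]
  by (auto simp: inner_Basis bij_betw_def inj_on_def)

definition squash :: "real \<Rightarrow> real" where "squash t = 1/2 + t / (2 * (1 + \<bar>t\<bar>))"
definition unsquash :: "real \<Rightarrow> real" where "unsquash u = (2*u - 1) / (1 - \<bar>2*u - 1\<bar>)"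

lemma squash_eq: "2 * squash t - 1 = t / (1 + \<bar>t\<bar>)"
  unfolding squash_def by (simp add: field_simps)

lemma squash_bounds: "0 < squash t" "squash t < 1"
proof -
  have "\<bar>t\<bar> / (1 + \<bar>t\<bar>) < 1" by simp
  then have "\<bar>2 * squash t - 1\<bar> < 1" unfolding squash_eq abs_divide by simp
  then show "0 < squash t" "squash t < 1" unfolding abs_less_iff by linarith+
qed

lemma unsquash_squash: "unsquash (squash t) = t"
proof -
  have "\<bar>t / (1 + \<bar>t\<bar>)\<bar> = \<bar>t\<bar> / (1 + \<bar>t\<bar>)" unfolding abs_divide by simp
  then have "1 - \<bar>t / (1 + \<bar>t\<bar>)\<bar> = 1 / (1 + \<bar>t\<bar>)" by (simp add: field_simps)
  then show ?thesis unfolding unsquash_def squash_eq by simp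
qed

lemma isCont_unsquash: "0 < u \<Longrightarrow> u < 1 \<Longrightarrow> isCont unsquash u"
  unfolding unsquash_def by (intro continuous_intros) auto

lemma unsquash_measurable[measurable]: "unsquash \<in> borel_measurable borel"
  unfolding unsquash_def[abs_def] by measurable

lemma squash_measurable[measurable]: "squash \<in> borel_measurable borel"
  unfolding squash_def[abs_def] by measurable

lemma unsquash_lower_bound: "0 < u \<Longrightarrow> u < 1 \<Longrightarrow> 1 / (1 - \<bar>2*u - 1\<bar>) - 1 \<le> \<bar>unsquash u\<bar>"
proof -
  assume u: "0 < u" "u < 1"
  then have p: "0 < 1 - \<bar>2*u - 1\<bar>" by (simp add: abs_less_iff)
  have "\<bar>unsquash u\<bar> = \<bar>2*u - 1\<bar> / (1 - \<bar>2*u - 1\<bar>)" unfolding unsquash_def abs_divide using p by simp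
  also have "\<dots> = 1 / (1 - \<bar>2*u - 1\<bar>) - 1" using p by (simp add: field_simps)
  finally show ?thesis by simp
qed

text \<open>A point is encoded by interleaving the binary digits of its squashed coordinates, written as
  base 4 digits \<open>0\<close> and \<open>2\<close>. Codes thus stay at least \<open>1/3\<close> below the next multiple of
  \<open>4^-(k+1)\<close>, so the digits of a convergent sequence of codes eventually stabilise, and decoding
  is continuous along it unless a coordinate escapes to infinity.\<close>
definition code_digit :: "'a::euclidean_space \<Rightarrow> nat \<Rightarrow> int" where
  "code_digit x k = 2 * bin_digit (squash (x \<bullet> basis_enum (k mod DIM('a)))) (k div DIM('a))"

definition encode :: "'a::euclidean_space \<Rightarrow> real" where
  "encode x = (\<Sum>k. real_of_int (code_digit x k) / 4^(k+1))"

definition decode_coord :: "nat \<Rightarrow> real \<Rightarrow> nat \<Rightarrow> real" where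
  "decode_coord D s i = (\<Sum>m. real_of_int (quart_digit s (m * D + i)) / 2 / 2^(m+1))"

definition decode :: "real \<Rightarrow> 'a::euclidean_space" where
  "decode s = (\<Sum>i<DIM('a). unsquash (decode_coord DIM('a) s i) *\<^sub>R basis_enum i)"

lemma code_digit_02: "code_digit x k \<in> {0, 2}"
  unfolding code_digit_def using bin_digit_01 by auto

lemma quart_digit_encode: "quart_digit (encode x) k = code_digit x k"
  unfolding encode_def by (rule quart_digit_series(1)) (rule code_digit_02)

lemma frac_encode_le: "4^(k+1) * encode x - real_of_int \<lfloor>4^(k+1) * encode x\<rfloor> \<le> 2/3"
  unfolding encode_def by (rule quart_digit_series(2)) (rule code_digit_02)

lemma encode_bounds: "0 \<le> encode x" "encode x \<le> 2/3"
  unfolding encode_def by (rule quart_series_bounds, rule code_digit_02)+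

lemma decode_coord_encode:
  fixes x :: "'a::euclidean_space"
  assumes i: "i < DIM('a)"
  shows "decode_coord DIM('a) (encode x) i = squash (x \<bullet> basis_enum i)"
proof -
  define u where "u = squash (x \<bullet> basis_enum i)"
  have "(m * DIM('a) + i) mod DIM('a) = i" "(m * DIM('a) + i) div DIM('a) = m" for m
    using i by auto
  then have "real_of_int (quart_digit (encode x) (m * DIM('a) + i)) / 2 / 2^(m+1)
      = real_of_int (bin_digit u m) / 2^(m+1)" for m
    unfolding quart_digit_encode code_digit_def u_def by simp
  then have "decode_coord DIM('a) (encode x) i = (\<Sum>m. real_of_int (bin_digit u m) / 2^(m+1))"
    unfolding decode_coord_def by simp
  also have "\<dots> = u"
    using squash_bounds unfolding u_def
    by (intro sums_unique[symmetric] bin_digits_sums) (auto intro: less_imp_le)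
  finally show ?thesis unfolding u_def .
qed

lemma decode_encode: "decode (encode x) = (x :: 'a::euclidean_space)"
proof -
  have "decode (encode x) = (\<Sum>i<DIM('a). (x \<bullet> basis_enum i) *\<^sub>R (basis_enum i :: 'a))"
    unfolding decode_def by (intro sum.cong refl) (simp add: decode_coord_encode unsquash_squash)
  also have "\<dots> = (\<Sum>b\<in>Basis. (x \<bullet> b) *\<^sub>R b)"
    by (rule sum.reindex_bij_betw[OF basis_enum_bij, where g="\<lambda>b. (x \<bullet> b) *\<^sub>R b"])
  also have "\<dots> = x" by (rule euclidean_representation)
  finally show ?thesis .
qed

lemma inner_decode:
  assumes i: "i < DIM('a::euclidean_space)"
  shows "(decode s :: 'a) \<bullet> basis_enum i = unsquash (decode_coord DIM('a) s i)"
proof -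
  have "(decode s :: 'a) \<bullet> basis_enum i
      = (\<Sum>j<DIM('a). unsquash (decode_coord DIM('a) s j) * ((basis_enum j :: 'a) \<bullet> basis_enum i))"
    unfolding decode_def by (simp add: inner_sum_left)
  also have "\<dots> = (\<Sum>j<DIM('a). if j = i then unsquash (decode_coord DIM('a) s j) else 0)"
    using i by (intro sum.cong refl) (simp add: inner_basis_enum)
  also have "\<dots> = unsquash (decode_coord DIM('a) s i)" using i by simp
  finally show ?thesis .
qed

lemma encode_measurable[measurable]: "(encode :: 'a::euclidean_space \<Rightarrow> real) \<in> borel_measurable borel"
proof -
  have "(\<lambda>x::'a. real_of_int (code_digit x k) / 4^(k+1)) \<in> borel_measurable borel" for k
  proof -
    have "(\<lambda>x::'a. 2^(k div DIM('a) + 1) * squash (x \<bullet> basis_enum (k mod DIM('a))))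
        \<in> borel_measurable borel"
      by measurable
    from borel_measurable_floor_mod[OF this, of 2] show ?thesis
      unfolding code_digit_def bin_digit_def by simp
  qed
  then show ?thesis unfolding encode_def[abs_def] by (rule borel_measurable_suminf)
qed

lemma decode_coord_measurable[measurable]: "(\<lambda>s. decode_coord D s i) \<in> borel_measurable borel"
proof -
  have "(\<lambda>s. real_of_int (quart_digit s (m * D + i)) / 2 / 2^(m+1)) \<in> borel_measurable borel" for m
  proof -
    have "(\<lambda>s::real. 4^(m * D + i + 1) * s) \<in> borel_measurable borel" by measurable
    from borel_measurable_floor_mod[OF this, of 4] show ?thesis unfolding quart_digit_def by simp
  qed
  then show ?thesis unfolding decode_coord_def by (rule borel_measurable_suminf)
qed

lemma decode_measurable[measurable]: "(decode :: real \<Rightarrow> 'a::euclidean_space) \<in> borel_measurable borel"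
  unfolding decode_def[abs_def] by measurable

lemma eventually_floor_eq:
  fixes t :: "nat \<Rightarrow> real"
  assumes "t \<longlonglongrightarrow> t0" "\<And>n. t n - real_of_int \<lfloor>t n\<rfloor> \<le> 2/3"
  shows "\<forall>\<^sub>F n in sequentially. \<lfloor>t n\<rfloor> = \<lfloor>t0\<rfloor>"
proof -
  define z where "z = \<lfloor>t0\<rfloor>"
  have pos: "0 < min (1/3) (real_of_int z + 1 - t0)" unfolding z_def by linarith
  have "\<forall>\<^sub>F n in sequentially. dist (t n) t0 < min (1/3) (real_of_int z + 1 - t0)"
    using assms(1) pos by (rule tendstoD)
  then show ?thesis
  proof eventually_elim
    case (elim n)
    then have d: "\<bar>t n - t0\<bar> < 1/3" "t n < real_of_int z + 1" by (auto simp: dist_real_def)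
    have "\<lfloor>t n\<rfloor> \<le> z" using d(2) by linarith
    moreover have "\<lfloor>t n\<rfloor> \<ge> z"
    proof (rule ccontr)
      assume "\<not> \<lfloor>t n\<rfloor> \<ge> z"
      then have "real_of_int \<lfloor>t n\<rfloor> \<le> real_of_int z - 1" by linarith
      moreover have "real_of_int z \<le> t0" unfolding z_def by linarith
      ultimately show False using assms(2)[of n] d(1) by linarith
    qed
    ultimately show ?case unfolding z_def by simp
  qed
qed

lemma decode_coord_tendsto:
  assumes ev: "\<And>k. \<forall>\<^sub>F n in sequentially. quart_digit (s n) k = quart_digit s0 k"
    and d: "\<And>n k. quart_digit (s n) k \<in> {0, 2}"
  shows "(\<lambda>n. decode_coord D (s n) i) \<longlonglongrightarrow> decode_coord D s0 i"
proof -
  define t where "t u m = real_of_int (quart_digit u (m * D + i)) / 2 / 2^(m+1)" for u m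
  have "(\<lambda>n. \<Sum>m. t (s n) m) \<longlonglongrightarrow> (\<Sum>m. t s0 m)"
  proof (rule tannerys_theorem[THEN conjunct2, THEN conjunct2])
    show "(\<lambda>n. t (s n) m) \<longlonglongrightarrow> t s0 m" for m
      by (rule tendsto_eventually) (use ev[of "m * D + i"] in \<open>eventually_elim, simp add: t_def\<close>)
    have "norm (t (s n) m) \<le> 1 / 2^(m+1)" for n m
      using d[of n "m * D + i"] by (auto simp: t_def)
    then show "\<forall>\<^sub>F (m, n) in sequentially \<times>\<^sub>F sequentially. norm (t (s n) m) \<le> 1 / 2^(m+1)"
      by (intro always_eventually) auto
    show "summable (\<lambda>m. 1 / 2^(m+1) :: real)"
      using summable_mult[OF summable_geometric[of "1/2::real"], of "1/2"] by (simp add: power_one_over)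
  qed simp
  then show ?thesis unfolding decode_coord_def t_def .
qed

definition code_set :: "nat \<Rightarrow> real set" where
  "code_set D = {s. (\<forall>k. quart_digit s k \<in> {0, 2} \<and> 4^(k+1) * s - real_of_int \<lfloor>4^(k+1) * s\<rfloor> \<le> 2/3)
                 \<and> (\<forall>i<D. 0 < decode_coord D s i \<and> decode_coord D s i < 1)}"

lemma code_set_sets: "code_set D \<in> sets borel"
proof -
  have [measurable]: "(\<lambda>s::real. \<lfloor>4^(k+1) * s\<rfloor>) \<in> borel \<rightarrow>\<^sub>M count_space UNIV" for k
    using measurable_compose[OF _ measurable_real_floor, of "\<lambda>s::real. 4^(k+1) * s" borel] by simp
  have "Measurable.pred borel (\<lambda>s. s \<in> code_set D)"
    unfolding code_set_def quart_digit_def by measurable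
  then show ?thesis by (simp add: pred_def)
qed

lemma encode_in_code_set: "encode (x :: 'a::euclidean_space) \<in> code_set DIM('a)"
  unfolding code_set_def
proof (intro CollectI conjI allI impI)
  fix k show "quart_digit (encode x) k \<in> {0, 2}" unfolding quart_digit_encode by (rule code_digit_02)
  show "4^(k+1) * encode x - real_of_int \<lfloor>4^(k+1) * encode x\<rfloor> \<le> 2/3" by (rule frac_encode_le)
next
  fix i assume i: "i < DIM('a)"
  show "0 < decode_coord DIM('a) (encode x) i" "decode_coord DIM('a) (encode x) i < 1"
    unfolding decode_coord_encode[OF i] by (rule squash_bounds)+
qed

lemma filterlim_unsquash_at_boundary:
  assumes u: "u \<longlonglongrightarrow> u0" "\<And>n. 0 < u n \<and> u n < 1" and u0: "u0 = 0 \<or> u0 = 1"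
  shows "filterlim (\<lambda>n. \<bar>unsquash (u n)\<bar>) at_top sequentially"
proof -
  define v where "v n = 1 - \<bar>2 * u n - 1\<bar>" for n
  have "v \<longlonglongrightarrow> 1 - \<bar>2 * u0 - 1\<bar>" unfolding v_def by (intro tendsto_intros u(1))
  moreover have "1 - \<bar>2 * u0 - 1\<bar> = 0" using u0 by auto
  moreover have "0 < v n" for n using u(2)[of n] by (auto simp: v_def abs_less_iff)
  ultimately have "filterlim v (at_right 0) sequentially"
    by (auto intro!: tendsto_imp_filterlim_at_right always_eventually)
  then have "filterlim (\<lambda>n. - 1 + inverse (v n)) at_top sequentially"
    by (intro filterlim_tendsto_add_at_top[OF tendsto_const]
        filterlim_compose[OF filterlim_inverse_at_top_right])
  then show ?thesis
    by (rule filterlim_at_top_mono)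
       (use unsquash_lower_bound u(2) in \<open>auto simp: v_def inverse_eq_divide\<close>)
qed

lemma decode_tendsto:
  assumes s: "\<And>n. s n \<in> code_set DIM('a)" and lim: "s \<longlonglongrightarrow> s0"
    and bounded: "liminf (\<lambda>n. ennreal (norm (decode (s n) :: 'a::euclidean_space))) \<noteq> \<infinity>"
  shows "(\<lambda>n. decode (s n) :: 'a) \<longlonglongrightarrow> decode s0"
proof -
  define u where "u n i = decode_coord DIM('a) (s n) i" for n i
  define u0 where "u0 i = decode_coord DIM('a) s0 i" for i
  have digits: "\<forall>\<^sub>F n in sequentially. quart_digit (s n) k = quart_digit s0 k" for k
  proof -
    have "(\<lambda>n. 4^(k+1) * s n) \<longlonglongrightarrow> 4^(k+1) * s0" by (intro tendsto_mult_left lim)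
    then have "\<forall>\<^sub>F n in sequentially. \<lfloor>4^(k+1) * s n\<rfloor> = \<lfloor>4^(k+1) * s0\<rfloor>"
      by (rule eventually_floor_eq) (use s in \<open>auto simp: code_set_def\<close>)
    then show ?thesis by eventually_elim (simp add: quart_digit_def)
  qed
  have u_lim: "(\<lambda>n. u n i) \<longlonglongrightarrow> u0 i" for i
    unfolding u_def u0_def
    by (rule decode_coord_tendsto[OF digits]) (use s in \<open>auto simp: code_set_def\<close>)
  have u: "0 < u n i \<and> u n i < 1" if "i < DIM('a)" for n i
    using s[of n] that by (simp add: code_set_def u_def)
  have interior: "0 < u0 i \<and> u0 i < 1" if i: "i < DIM('a)" for i
  proof (rule ccontr)
    assume "\<not> (0 < u0 i \<and> u0 i < 1)"
    moreover have "0 \<le> u n i" "u n i \<le> 1" for n using u[OF i, of n] by auto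
    then have "0 \<le> u0 i" "u0 i \<le> 1"
      by (auto intro!: tendsto_lowerbound[OF u_lim] tendsto_upperbound[OF u_lim] always_eventually)
    ultimately have "u0 i = 0 \<or> u0 i = 1" by linarith
    then have "filterlim (\<lambda>n. \<bar>unsquash (u n i)\<bar>) at_top sequentially"
      using filterlim_unsquash_at_boundary[OF u_lim] u[OF i] by blast
    moreover have "\<bar>unsquash (u n i)\<bar> \<le> norm (decode (s n) :: 'a)" for n
      using Basis_le_norm[OF basis_enum_in_Basis[OF i], of "decode (s n) :: 'a"]
      by (simp add: inner_decode[OF i] u_def)
    ultimately have "filterlim (\<lambda>n. norm (decode (s n) :: 'a)) at_top sequentially"
      by (auto elim!: filterlim_at_top_mono intro: always_eventually)
    then have "liminf (\<lambda>n. ennreal (norm (decode (s n) :: 'a))) = \<infinity>"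
      by (metis ennreal_tendsto_top_eq_at_top lim_imp_Liminf trivial_limit_sequentially
          infinity_ennreal_def)
    with bounded show False by simp
  qed
  have "(\<lambda>n. unsquash (u n i)) \<longlonglongrightarrow> unsquash (u0 i)" if "i < DIM('a)" for i
    by (rule isCont_tendsto_compose[OF _ u_lim]) (use interior[OF that] in \<open>simp add: isCont_unsquash\<close>)
  then have "(\<lambda>n. \<Sum>i<DIM('a). unsquash (u n i) *\<^sub>R (basis_enum i :: 'a))
      \<longlonglongrightarrow> (\<Sum>i<DIM('a). unsquash (u0 i) *\<^sub>R basis_enum i)"
    by (intro tendsto_intros) auto
  then show ?thesis unfolding decode_def u_def u0_def .
qed

lemma Skorohod_subsequence_bounded_support:
  fixes \<sigma> :: "nat \<Rightarrow> real measure"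
  assumes \<sigma>: "\<And>n. real_distribution (\<sigma> n)" and support: "\<And>n. measure (\<sigma> n) {a<..b} = 1"
    and "a < b"
  obtains r :: "nat \<Rightarrow> nat" and \<Omega> :: "real measure" and Ys Y where
    "strict_mono r" "prob_space \<Omega>" "\<And>n. Ys n \<in> borel_measurable \<Omega>" "Y \<in> borel_measurable \<Omega>"
    "\<And>n. distr \<Omega> borel (Ys n) = \<sigma> (r n)" "\<And>\<omega>. \<omega> \<in> space \<Omega> \<Longrightarrow> (\<lambda>n. Ys n \<omega>) \<longlonglongrightarrow> Y \<omega>"
proof -
  have "tight \<sigma>" unfolding tight_def
  proof (intro conjI allI impI \<sigma>)
    fix \<epsilon> :: real assume "0 < \<epsilon>"
    then show "\<exists>a b. a < b \<and> (\<forall>n. 1 - \<epsilon> < measure (\<sigma> n) {a<..b})"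
      using support \<open>a < b\<close> by (intro exI[of _ a] exI[of _ b]) simp
  qed
  then obtain r M where r: "strict_mono r" "real_distribution M" "weak_conv_m (\<sigma> \<circ> id \<circ> r) M"
    using tight_imp_convergent_subsubsequence[of \<sigma> id] by (auto simp: strict_mono_def)
  moreover have "real_distribution ((\<sigma> \<circ> id \<circ> r) n)" for n using \<sigma> by simp
  ultimately obtain \<Omega> :: "real measure" and Ys Y where
    "prob_space \<Omega>" "\<forall>n. Ys n \<in> borel_measurable \<Omega>" "\<forall>n. distr \<Omega> borel (Ys n) = (\<sigma> \<circ> id \<circ> r) n"
    "Y \<in> \<Omega> \<rightarrow>\<^sub>M lborel" "\<forall>\<omega>\<in>space \<Omega>. (\<lambda>n. Ys n \<omega>) \<longlonglongrightarrow> Y \<omega>"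
    using Skorohod[of "\<sigma> \<circ> id \<circ> r" M] by blast
  then show thesis by (intro that[OF r(1), of \<Omega> Ys Y]) (auto simp: measurable_lborel1)
qed

lemma AE_liminf_finite:
  fixes u :: "nat \<Rightarrow> 'b \<Rightarrow> ennreal"
  assumes [measurable]: "\<And>n. u n \<in> borel_measurable M"
    and bound: "\<And>n. (\<integral>\<^sup>+x. u n x \<partial>M) \<le> B" and "B < \<infinity>"
  shows "AE x in M. liminf (\<lambda>n. u n x) \<noteq> \<infinity>"
proof -
  have "(\<integral>\<^sup>+x. liminf (\<lambda>n. u n x) \<partial>M) \<le> liminf (\<lambda>n. \<integral>\<^sup>+x. u n x \<partial>M)"
    by (rule nn_integral_liminf) simp
  also have "\<dots> \<le> B" by (rule Liminf_le) (use bound in auto)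
  finally show ?thesis using \<open>B < \<infinity>\<close> by (intro nn_integral_PInf_AE) auto
qed

lemma real_distribution_encode:
  fixes \<rho> :: "'a::euclidean_space measure"
  assumes \<rho>: "prob_space \<rho>" "sets \<rho> = sets borel"
  shows "real_distribution (distr \<rho> borel encode)" "measure (distr \<rho> borel encode) {-1<..1} = 1"
proof -
  have encode: "encode \<in> \<rho> \<rightarrow>\<^sub>M borel"
    unfolding measurable_cong_sets[OF \<rho>(2) refl] by (rule encode_measurable)
  show "real_distribution (distr \<rho> borel encode)"
    unfolding real_distribution_def real_distribution_axioms_def
    using prob_space.prob_space_distr[OF \<rho>(1) encode] by simp
  have "-1 < encode x \<and> encode x \<le> 1" for x :: 'a using encode_bounds[of x] by linarith
  then have "encode -` {-1<..1} \<inter> space \<rho> = space \<rho>" by auto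
  then show "measure (distr \<rho> borel encode) {-1<..1} = 1"
    using prob_space.prob_space[OF \<rho>(1)] encode by (simp add: measure_distr)
qed

lemma distr_decode_of_distr_encode:
  fixes \<rho> :: "'a::euclidean_space measure"
  assumes \<rho>: "sets \<rho> = sets borel" and [measurable]: "Y \<in> borel_measurable \<Omega>"
    and Y: "distr \<Omega> borel Y = distr \<rho> borel encode"
  shows "distr \<Omega> borel (\<lambda>\<omega>. decode (Y \<omega>) :: 'a) = \<rho>" "AE \<omega> in \<Omega>. Y \<omega> \<in> code_set DIM('a)"
proof -
  have [measurable]: "encode \<in> \<rho> \<rightarrow>\<^sub>M borel"
    unfolding measurable_cong_sets[OF \<rho> refl] by (rule encode_measurable)
  have "distr \<Omega> borel (\<lambda>\<omega>. decode (Y \<omega>) :: 'a) = distr (distr \<rho> borel encode) borel decode"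
    unfolding Y[symmetric] by (subst distr_distr) (auto simp: comp_def)
  also have "\<dots> = \<rho>"
    by (subst distr_distr) (auto simp: comp_def decode_encode \<rho> intro!: distr_id2)
  finally show "distr \<Omega> borel (\<lambda>\<omega>. decode (Y \<omega>) :: 'a) = \<rho>" .
  have "AE s in distr \<rho> borel encode. s \<in> code_set DIM('a)"
    by (subst AE_distr_iff) (auto simp: code_set_sets encode_in_code_set)
  then show "AE \<omega> in \<Omega>. Y \<omega> \<in> code_set DIM('a)"
    by (subst (asm) Y[symmetric], subst (asm) AE_distr_iff) (auto simp: code_set_sets)
qed

text \<open>Helly's selection theorem and Skorohod's representation are applied on the real line, to the
  laws of the codes.\<close>
lemma Skorohod_subsequence_bounded_moment:
  fixes \<rho> :: "nat \<Rightarrow> 'a::euclidean_space measure"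
  assumes \<rho>: "\<And>n. prob_space (\<rho> n)" "\<And>n. sets (\<rho> n) = sets borel"
    and moment: "\<And>n. (\<integral>\<^sup>+x. ennreal (norm x) \<partial>\<rho> n) \<le> B" and "B < \<infinity>"
  obtains r :: "nat \<Rightarrow> nat" and \<Omega> :: "real measure" and Xs :: "nat \<Rightarrow> real \<Rightarrow> 'a" and X where
    "strict_mono r" "prob_space \<Omega>" "\<And>n. Xs n \<in> borel_measurable \<Omega>" "X \<in> borel_measurable \<Omega>"
    "\<And>n. distr \<Omega> borel (Xs n) = \<rho> (r n)" "AE \<omega> in \<Omega>. (\<lambda>n. Xs n \<omega>) \<longlonglongrightarrow> X \<omega>"
proof -
  have "- 1 < (1::real)" by simp
  obtain r and \<Omega> :: "real measure" and Ys Y where r: "strict_mono r" and \<Omega>: "prob_space \<Omega>"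
    and [measurable]: "\<And>n. Ys n \<in> borel_measurable \<Omega>" "Y \<in> borel_measurable \<Omega>"
    and Ys: "\<And>n. distr \<Omega> borel (Ys n) = distr (\<rho> (r n)) borel encode"
    and lim: "\<And>\<omega>. \<omega> \<in> space \<Omega> \<Longrightarrow> (\<lambda>n. Ys n \<omega>) \<longlonglongrightarrow> Y \<omega>"
    using Skorohod_subsequence_bounded_support[of "\<lambda>n. distr (\<rho> n) borel encode",
        OF real_distribution_encode[OF \<rho>] \<open>- 1 < (1::real)\<close>] by blast
  define Xs where "Xs n \<omega> = (decode (Ys n \<omega>) :: 'a)" for n \<omega>
  have [measurable]: "Xs n \<in> borel_measurable \<Omega>" for n unfolding Xs_def by measurable
  have Xs: "distr \<Omega> borel (Xs n) = \<rho> (r n)" for n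
    unfolding Xs_def by (rule distr_decode_of_distr_encode(1)[OF \<rho>(2) _ Ys]) simp
  have "AE \<omega> in \<Omega>. \<forall>n. Ys n \<omega> \<in> code_set DIM('a)"
    unfolding AE_all_countable by (intro allI distr_decode_of_distr_encode(2)[OF \<rho>(2) _ Ys]) simp
  moreover have "(\<integral>\<^sup>+\<omega>. ennreal (norm (Xs n \<omega>)) \<partial>\<Omega>) = (\<integral>\<^sup>+x. ennreal (norm x) \<partial>\<rho> (r n))" for n
    unfolding Xs[symmetric] by (subst nn_integral_distr) auto
  then have "AE \<omega> in \<Omega>. liminf (\<lambda>n. ennreal (norm (Xs n \<omega>))) \<noteq> \<infinity>"
    using moment \<open>B < \<infinity>\<close> by (intro AE_liminf_finite) auto
  ultimately have "AE \<omega> in \<Omega>. (\<lambda>n. Xs n \<omega>) \<longlonglongrightarrow> decode (Y \<omega>)"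
    using AE_space by eventually_elim (auto simp: Xs_def intro!: decode_tendsto lim)
  then show thesis using r \<Omega> Xs by (intro that[of r \<Omega> Xs "\<lambda>\<omega>. decode (Y \<omega>)"]) auto
qed

section \<open>Passing to the limit\<close>

lemma less_e2ennreal_iff: "0 \<le> x \<Longrightarrow> y < e2ennreal x \<longleftrightarrow> enn2ereal y < x"
  by (metis enn2ereal_e2ennreal less_ennreal.rep_eq)

lemma nn_integral_lsc_le_liminf:
  fixes g :: "'a::topological_space \<Rightarrow> ereal"
  assumes g: "lsc g" "\<And>x. 0 \<le> g x"
    and [measurable]: "\<And>k. Xs k \<in> borel_measurable \<Omega>" "X \<in> borel_measurable \<Omega>"
    and lim: "AE \<omega> in \<Omega>. (\<lambda>k. Xs k \<omega>) \<longlonglongrightarrow> X \<omega>"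
  shows "(\<integral>\<^sup>+\<omega>. e2ennreal (g (X \<omega>)) \<partial>\<Omega>) \<le> liminf (\<lambda>k. \<integral>\<^sup>+\<omega>. e2ennreal (g (Xs k \<omega>)) \<partial>\<Omega>)"
proof -
  have [measurable]: "g \<in> borel_measurable borel" by (rule borel_measurable_lsc[OF g(1)])
  have "(\<integral>\<^sup>+\<omega>. e2ennreal (g (X \<omega>)) \<partial>\<Omega>) \<le> (\<integral>\<^sup>+\<omega>. liminf (\<lambda>k. e2ennreal (g (Xs k \<omega>))) \<partial>\<Omega>)"
    using lim
  proof (intro nn_integral_mono_AE, eventually_elim, unfold le_Liminf_iff, intro allI impI)
    fix \<omega> y assume "(\<lambda>k. Xs k \<omega>) \<longlonglongrightarrow> X \<omega>" "y < e2ennreal (g (X \<omega>))"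
    then have "\<forall>\<^sub>F k in sequentially. enn2ereal y < g (Xs k \<omega>)"
      by (intro lsc_tendsto[OF g(1)]) (auto simp: less_e2ennreal_iff g(2))
    then show "\<forall>\<^sub>F k in sequentially. y < e2ennreal (g (Xs k \<omega>))"
      by eventually_elim (simp add: less_e2ennreal_iff g(2))
  qed
  also have "\<dots> \<le> liminf (\<lambda>k. \<integral>\<^sup>+\<omega>. e2ennreal (g (Xs k \<omega>)) \<partial>\<Omega>)"
    by (rule nn_integral_liminf) simp
  finally show ?thesis .
qed

lemma integral_lsc_add_continuous_le:
  fixes g :: "'a::topological_space \<Rightarrow> ereal" and w :: "'a \<Rightarrow> real"
  assumes g: "lsc g" "\<And>x. 0 \<le> g x" and w: "continuous_on UNIV w" "\<And>x. 0 \<le> g x + ereal (w x)"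
    and [measurable]: "\<And>k. Xs k \<in> borel_measurable \<Omega>" "X \<in> borel_measurable \<Omega>"
    and lim: "AE \<omega> in \<Omega>. (\<lambda>k. Xs k \<omega>) \<longlonglongrightarrow> X \<omega>"
    and int: "\<And>k. integrable \<Omega> (\<lambda>\<omega>. w (Xs k \<omega>))" "integrable \<Omega> (\<lambda>\<omega>. w (X \<omega>))"
    and bound: "\<And>k. enn2ereal (\<integral>\<^sup>+\<omega>. e2ennreal (g (Xs k \<omega>)) \<partial>\<Omega>) + ereal (\<integral>\<omega>. w (Xs k \<omega>) \<partial>\<Omega>) \<le> ereal b"
  shows "enn2ereal (\<integral>\<^sup>+\<omega>. e2ennreal (g (X \<omega>)) \<partial>\<Omega>) + ereal (\<integral>\<omega>. w (X \<omega>) \<partial>\<Omega>) \<le> ereal b"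
proof -
  have [measurable]: "g \<in> borel_measurable borel" by (rule borel_measurable_lsc[OF g(1)])
  have [measurable]: "w \<in> borel_measurable borel" by (rule borel_measurable_continuous_onI[OF w(1)])
  define h where "h x = g x + ereal (w x)" for x
  have split: "enn2ereal (\<integral>\<^sup>+\<omega>. e2ennreal (h (Y \<omega>)) \<partial>\<Omega>)
      = enn2ereal (\<integral>\<^sup>+\<omega>. e2ennreal (g (Y \<omega>)) \<partial>\<Omega>) + ereal (\<integral>\<omega>. w (Y \<omega>) \<partial>\<Omega>)"
    if [measurable]: "Y \<in> borel_measurable \<Omega>" and "integrable \<Omega> (\<lambda>\<omega>. w (Y \<omega>))" for Y
    unfolding h_def by (rule nn_integral_add_integrable) (use that g(2) w(2) in auto)
  have h_bound: "enn2ereal (\<integral>\<^sup>+\<omega>. e2ennreal (h (Xs k \<omega>)) \<partial>\<Omega>) \<le> ereal b" for k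
    using split[of "Xs k"] int bound by simp
  have "0 \<le> ereal b" using order_trans[OF enn2ereal_nonneg h_bound] .
  then have "0 \<le> b" by simp
  have "(\<integral>\<^sup>+\<omega>. e2ennreal (h (X \<omega>)) \<partial>\<Omega>) \<le> liminf (\<lambda>k. \<integral>\<^sup>+\<omega>. e2ennreal (h (Xs k \<omega>)) \<partial>\<Omega>)"
    unfolding h_def
    by (rule nn_integral_lsc_le_liminf[OF lsc_add_continuous[OF g(1) w(1)] w(2) _ _ lim]; measurable)
  also have "\<dots> \<le> ennreal b"
    using e2ennreal_mono[OF h_bound] by (intro Liminf_le) simp_all
  finally have "enn2ereal (\<integral>\<^sup>+\<omega>. e2ennreal (h (X \<omega>)) \<partial>\<Omega>) \<le> ereal b"
    using \<open>0 \<le> b\<close> by (simp add: less_eq_ennreal.rep_eq)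
  then show ?thesis using split[of X] int(2) by simp
qed

text \<open>Upper semicontinuity of \<open>Y \<mapsto> \<integral>\<psi>(Y)\<close>: the bounded \<open>g\<close>-energy makes the sequence uniformly
  integrable.\<close>
lemma integral_ge_of_superlinear_bound:
  fixes g :: "'a::real_normed_vector \<Rightarrow> ereal" and \<psi> :: "'a \<Rightarrow> real"
  assumes \<Omega>: "prob_space \<Omega>" and g: "lsc g" "superlinear g" "\<And>x. 0 \<le> g x"
    and [measurable]: "\<And>k. Xs k \<in> borel_measurable \<Omega>" "X \<in> borel_measurable \<Omega>"
    and lim: "AE \<omega> in \<Omega>. (\<lambda>k. Xs k \<omega>) \<longlonglongrightarrow> X \<omega>"
    and bound: "\<And>k. (\<integral>\<^sup>+\<omega>. e2ennreal (g (Xs k \<omega>)) \<partial>\<Omega>) \<le> ennreal B"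
    and \<psi>: "continuous_on UNIV \<psi>" "\<And>x. \<psi> x \<le> a + L * norm x"
    and int: "\<And>k. integrable \<Omega> (\<lambda>\<omega>. \<psi> (Xs k \<omega>))" "integrable \<Omega> (\<lambda>\<omega>. \<psi> (X \<omega>))"
    and c: "\<And>k. c \<le> (\<integral>\<omega>. \<psi> (Xs k \<omega>) \<partial>\<Omega>)"
  shows "c \<le> (\<integral>\<omega>. \<psi> (X \<omega>) \<partial>\<Omega>)"
proof (rule field_le_epsilon)
  interpret prob_space \<Omega> by fact
  fix \<delta> :: real assume "0 < \<delta>"
  define e where "e = \<delta> / (\<bar>B\<bar> + 1)"
  have "e > 0" using \<open>0 < \<delta>\<close> by (simp add: e_def)
  have "\<delta> * \<bar>B\<bar> \<le> \<delta> * (\<bar>B\<bar> + 1)" using \<open>0 < \<delta>\<close> by (intro mult_left_mono) auto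
  then have "e * \<bar>B\<bar> \<le> \<delta>" by (simp add: e_def pos_divide_le_eq)
  have \<psi>_e: "\<psi> x / e \<le> a / e + L / e * norm x" for x
    using divide_right_mono[OF \<psi>(2)[of x]] \<open>e > 0\<close> by (simp add: add_divide_distrib)
  obtain K where K: "\<And>x. ereal (\<psi> x / e) \<le> g x + ereal K"
    by (rule superlinear_dominates_linear_growth[OF g(2,3) \<psi>_e]) blast
  text \<open>This is where superlinearity enters: \<open>g + w\<close> is nonnegative, so Fatou's lemma applies.\<close>
  define w where "w x = K - \<psi> x / e" for x
  have gw: "0 \<le> g x + ereal (w x)" for x
    using K[of x] by (cases "g x") (auto simp: w_def)
  have w_cont: "continuous_on UNIV w"
    unfolding w_def using \<open>e > 0\<close> by (intro continuous_intros \<psi>(1)) auto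
  have w_int: "integrable \<Omega> (\<lambda>\<omega>. w (Y \<omega>))"
    and w_integral: "(\<integral>\<omega>. w (Y \<omega>) \<partial>\<Omega>) = K - (\<integral>\<omega>. \<psi> (Y \<omega>) \<partial>\<Omega>) / e"
    if "integrable \<Omega> (\<lambda>\<omega>. \<psi> (Y \<omega>))" for Y
    unfolding w_def using that by (simp_all add: prob_space)
  have bound_w: "enn2ereal (\<integral>\<^sup>+\<omega>. e2ennreal (g (Xs k \<omega>)) \<partial>\<Omega>) + ereal (\<integral>\<omega>. w (Xs k \<omega>) \<partial>\<Omega>)
      \<le> ereal \<bar>B\<bar> + ereal (K - c / e)" for k
  proof (rule add_mono)
    have "(\<integral>\<^sup>+\<omega>. e2ennreal (g (Xs k \<omega>)) \<partial>\<Omega>) \<le> ennreal \<bar>B\<bar>"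
      using bound[of k] ennreal_leI[OF abs_ge_self[of B]] by (rule order_trans)
    then show "enn2ereal (\<integral>\<^sup>+\<omega>. e2ennreal (g (Xs k \<omega>)) \<partial>\<Omega>) \<le> ereal \<bar>B\<bar>"
      by (simp add: less_eq_ennreal.rep_eq)
    show "ereal (\<integral>\<omega>. w (Xs k \<omega>) \<partial>\<Omega>) \<le> ereal (K - c / e)"
      using w_integral[OF int(1)] divide_right_mono[OF c[of k]] \<open>e > 0\<close> by simp
  qed
  have "enn2ereal (\<integral>\<^sup>+\<omega>. e2ennreal (g (X \<omega>)) \<partial>\<Omega>) + ereal (\<integral>\<omega>. w (X \<omega>) \<partial>\<Omega>)
      \<le> ereal (\<bar>B\<bar> + (K - c / e))"
    by (rule integral_lsc_add_continuous_le[OF g(1,3) w_cont gw _ _ lim w_int[OF int(1)]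
          w_int[OF int(2)]]) (use bound_w in simp_all)
  then have "ereal (\<integral>\<omega>. w (X \<omega>) \<partial>\<Omega>) \<le> ereal (\<bar>B\<bar> + (K - c / e))"
    by (rule order_trans[OF ereal_le_add_self2[OF enn2ereal_nonneg]])
  then have "c / e - (\<integral>\<omega>. \<psi> (X \<omega>) \<partial>\<Omega>) / e \<le> \<bar>B\<bar>"
    using w_integral[OF int(2)] by simp
  then have "c - (\<integral>\<omega>. \<psi> (X \<omega>) \<partial>\<Omega>) \<le> e * \<bar>B\<bar>"
    using \<open>e > 0\<close> by (simp add: diff_divide_distrib[symmetric] divide_le_eq mult.commute)
  then show "c \<le> (\<integral>\<omega>. \<psi> (X \<omega>) \<partial>\<Omega>) + \<delta>" using \<open>e * \<bar>B\<bar> \<le> \<delta>\<close> by linarith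
qed

lemma convex_le_limit:
  fixes g :: "'a::euclidean_space \<Rightarrow> ereal"
  assumes \<mu>: "\<mu> \<in> P1" and \<Omega>: "prob_space \<Omega>" and g: "lsc g" "superlinear g" "\<And>x. 0 \<le> g x"
    and [measurable]: "\<And>k. Xs k \<in> borel_measurable \<Omega>" "X \<in> borel_measurable \<Omega>"
    and lim: "AE \<omega> in \<Omega>. (\<lambda>k. Xs k \<omega>) \<longlonglongrightarrow> X \<omega>"
    and bound: "\<And>k. (\<integral>\<^sup>+\<omega>. e2ennreal (g (Xs k \<omega>)) \<partial>\<Omega>) \<le> ennreal B"
    and P1: "\<And>k. distr \<Omega> borel (Xs k) \<in> P1" "distr \<Omega> borel X \<in> P1"
    and le: "\<And>k. convex_le \<mu> (distr \<Omega> borel (Xs k))"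
  shows "convex_le \<mu> (distr \<Omega> borel X)"
  unfolding convex_le_def
proof (intro allI impI)
  fix \<phi> :: "'a \<Rightarrow> real" assume \<phi>: "convex_on UNIV \<phi>"
  obtain \<psi> :: "nat \<Rightarrow> 'a \<Rightarrow> real" and a L where
    \<psi>: "\<And>n. convex_on UNIV (\<psi> n)" "\<And>n. continuous_on UNIV (\<psi> n)"
      "\<And>n x. \<bar>\<psi> n x\<bar> \<le> a n + L n * norm x"
      "\<And>n x. \<psi> n x \<le> \<psi> (Suc n) x" "\<And>x. (\<lambda>n. \<psi> n x) \<longlonglongrightarrow> \<phi> x"
    by (rule convex_on_approx_lipschitz[OF \<phi>]) blast
  have [measurable]: "\<psi> n \<in> borel_measurable borel" for n
    using \<psi>(2) by (rule borel_measurable_continuous_onI)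
  have \<phi>_meas: "\<phi> \<in> borel_measurable borel"
    using convex_on_continuous[OF open_UNIV \<phi>] by (rule borel_measurable_continuous_onI)
  have int: "integrable M (\<psi> n)" if "M \<in> P1" for M n
    by (rule integrable_P1_linear_growth[OF that _ \<psi>(3)]) simp
  have distr_int: "integrable \<Omega> (\<lambda>\<omega>. \<psi> n (Y \<omega>))"
    and distr_integral: "(\<integral>x. \<psi> n x \<partial>distr \<Omega> borel Y) = (\<integral>\<omega>. \<psi> n (Y \<omega>) \<partial>\<Omega>)"
    if [measurable]: "Y \<in> borel_measurable \<Omega>" and "distr \<Omega> borel Y \<in> P1" for Y n
    using int[OF that(2), of n] by (simp_all add: integrable_distr_eq integral_distr)
  have le_n: "(\<integral>x. \<psi> n x \<partial>\<mu>) \<le> (\<integral>x. \<psi> n x \<partial>distr \<Omega> borel X)" for n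
  proof -
    have "(\<integral>x. \<psi> n x \<partial>\<mu>) \<le> (\<integral>\<omega>. \<psi> n (Xs k \<omega>) \<partial>\<Omega>)" for k
      using le[of k] \<psi>(1)[of n] unfolding convex_le_def
      by (auto simp: eint_integrable int[OF \<mu>] int[OF P1(1)] distr_integral[OF _ P1(1)])
    then have "(\<integral>x. \<psi> n x \<partial>\<mu>) \<le> (\<integral>\<omega>. \<psi> n (X \<omega>) \<partial>\<Omega>)"
      using \<psi>(3)[of n] abs_le_D1
      by (intro integral_ge_of_superlinear_bound[OF \<Omega> g _ _ lim bound \<psi>(2)]
          distr_int P1) auto
    then show ?thesis by (simp add: distr_integral[OF _ P1(2)])
  qed
  have conv: "(\<lambda>n. ereal (\<integral>x. \<psi> n x \<partial>M)) \<longlonglongrightarrow> eint M (\<lambda>x. ereal (\<phi> x))" if "M \<in> P1" for M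
    using that \<phi>_meas by (intro eint_monotone_convergence int \<psi>(4,5)) (simp add: borel_measurable_P1)
  show "eint \<mu> (\<lambda>x. ereal (\<phi> x)) \<le> eint (distr \<Omega> borel X) (\<lambda>x. ereal (\<phi> x))"
    by (rule LIMSEQ_le[OF conv[OF \<mu>] conv[OF P1(2)]]) (use le_n in auto)
qed

section \<open>Existence of a minimiser\<close>

lemma P1_limit_of_bounded_energy:
  fixes g :: "'a::euclidean_space \<Rightarrow> ereal" and \<rho>s :: "nat \<Rightarrow> 'a measure"
  assumes g: "lsc g" "superlinear g" "\<And>x. ereal (norm x) \<le> g x"
    and \<rho>s: "\<And>n. \<rho>s n \<in> P1"
    and bound: "\<And>n. (\<integral>\<^sup>+x. e2ennreal (g x) \<partial>\<rho>s n) \<le> B" and "B < \<infinity>"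
  obtains \<rho> where "\<rho> \<in> P1"
    "(\<integral>\<^sup>+x. e2ennreal (g x) \<partial>\<rho>) \<le> limsup (\<lambda>n. \<integral>\<^sup>+x. e2ennreal (g x) \<partial>\<rho>s n)"
    "\<And>\<mu>. \<mu> \<in> P1 \<Longrightarrow> (\<And>n. convex_le \<mu> (\<rho>s n)) \<Longrightarrow> convex_le \<mu> \<rho>"
proof -
  have g0: "0 \<le> g x" for x using order_trans[OF _ g(3)] by simp
  have [measurable]: "g \<in> borel_measurable borel" by (rule borel_measurable_lsc[OF g(1)])
  have norm_le_g: "(\<integral>\<^sup>+x. ennreal (norm x) \<partial>M) \<le> (\<integral>\<^sup>+x. e2ennreal (g x) \<partial>M)" for M
    using e2ennreal_mono[OF g(3)] by (intro nn_integral_mono) simp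
  obtain r :: "nat \<Rightarrow> nat" and \<Omega> :: "real measure" and Xs X where r: "strict_mono r"
    and \<Omega>: "prob_space \<Omega>" and [measurable]: "\<And>n. Xs n \<in> borel_measurable \<Omega>"
    and X_meas[measurable]: "X \<in> borel_measurable \<Omega>"
    and Xs: "\<And>n. distr \<Omega> borel (Xs n) = \<rho>s (r n)" and lim: "AE \<omega> in \<Omega>. (\<lambda>n. Xs n \<omega>) \<longlonglongrightarrow> X \<omega>"
    by (rule Skorohod_subsequence_bounded_moment[of \<rho>s, OF P1D(2)[OF \<rho>s] P1D(1)[OF \<rho>s]
        order_trans[OF norm_le_g bound] \<open>B < \<infinity>\<close>]) blast
  define \<rho> where "\<rho> = distr \<Omega> borel X"
  have energy: "(\<integral>\<^sup>+x. e2ennreal (g x) \<partial>distr \<Omega> borel Y) = (\<integral>\<^sup>+\<omega>. e2ennreal (g (Y \<omega>)) \<partial>\<Omega>)"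
    if [measurable]: "Y \<in> borel_measurable \<Omega>" for Y
    by (rule nn_integral_distr) simp_all
  have "(\<integral>\<^sup>+x. e2ennreal (g x) \<partial>\<rho>) \<le> liminf (\<lambda>k. \<integral>\<^sup>+x. e2ennreal (g x) \<partial>\<rho>s (r k))"
    using nn_integral_lsc_le_liminf[OF g(1) g0 _ _ lim] by (simp add: \<rho>_def energy Xs[symmetric])
  also have "\<dots> \<le> limsup (\<lambda>k. \<integral>\<^sup>+x. e2ennreal (g x) \<partial>\<rho>s (r k))" by (rule Liminf_le_Limsup) simp
  also have "\<dots> \<le> limsup (\<lambda>n. \<integral>\<^sup>+x. e2ennreal (g x) \<partial>\<rho>s n)"
    using limsup_subseq_mono[OF r, of "\<lambda>n. \<integral>\<^sup>+x. e2ennreal (g x) \<partial>\<rho>s n"] by (simp add: comp_def)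
  finally have energy_le: "(\<integral>\<^sup>+x. e2ennreal (g x) \<partial>\<rho>) \<le> limsup (\<lambda>n. \<integral>\<^sup>+x. e2ennreal (g x) \<partial>\<rho>s n)" .
  have "limsup (\<lambda>n. \<integral>\<^sup>+x. e2ennreal (g x) \<partial>\<rho>s n) \<le> B"
    by (rule Limsup_bounded) (simp add: bound)
  then have "(\<integral>\<^sup>+x. ennreal (norm x) \<partial>\<rho>) \<le> B"
    using order_trans[OF norm_le_g energy_le] by (rule order_trans[rotated])
  then have "(\<integral>\<^sup>+x. ennreal (norm x) \<partial>\<rho>) < \<infinity>" using \<open>B < \<infinity>\<close> by (rule le_less_trans)
  then have "\<rho> \<in> P1"
    unfolding P1_def \<rho>_def using prob_space.prob_space_distr[OF \<Omega> X_meas]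
    by (simp add: integrable_iff_bounded)
  moreover have convex: "convex_le \<mu> \<rho>" if "\<mu> \<in> P1" "\<And>n. convex_le \<mu> (\<rho>s n)" for \<mu>
    unfolding \<rho>_def
  proof (rule convex_le_limit[OF that(1) \<Omega> g(1,2) g0 _ _ lim])
    show "(\<integral>\<^sup>+\<omega>. e2ennreal (g (Xs k \<omega>)) \<partial>\<Omega>) \<le> ennreal (enn2real B)" for k
      using bound[of "r k"] \<open>B < \<infinity>\<close> by (simp add: energy Xs[symmetric])
  qed (use \<open>\<rho> \<in> P1\<close> \<rho>s that(2) in \<open>simp_all add: \<rho>_def Xs\<close>)
  ultimately show thesis by (rule that[OF _ energy_le])
qed

lemma nn_integral_min_on_convex_upper_bounds:
  fixes g :: "'a::euclidean_space \<Rightarrow> ereal" and \<M> :: "'a measure set"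
  assumes g: "lsc g" "superlinear g" "\<And>x. ereal (norm x) \<le> g x" and "\<M> \<subseteq> P1"
  defines "S \<equiv> {\<rho> \<in> P1. \<forall>\<mu>\<in>\<M>. convex_le \<mu> \<rho>}"
  assumes finite: "(INF \<rho>\<in>S. \<integral>\<^sup>+x. e2ennreal (g x) \<partial>\<rho>) < \<infinity>"
  obtains \<rho> where "\<rho> \<in> S" "(\<integral>\<^sup>+x. e2ennreal (g x) \<partial>\<rho>) = (INF \<rho>\<in>S. \<integral>\<^sup>+x. e2ennreal (g x) \<partial>\<rho>)"
proof -
  define E where "E \<rho> = (\<integral>\<^sup>+x. e2ennreal (g x) \<partial>\<rho>)" for \<rho>
  define I where "I = (INF \<rho>\<in>S. E \<rho>)"
  have "I < \<infinity>" using finite by (simp add: I_def E_def)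
  have "\<exists>\<rho>\<in>S. E \<rho> < I + ennreal (inverse (Suc n))" for n
  proof -
    have "I + 0 < I + ennreal (inverse (Suc n))"
      using \<open>I < \<infinity>\<close> by (subst ennreal_add_left_cancel_less) simp
    then have "(INF \<rho>\<in>S. E \<rho>) < I + ennreal (inverse (Suc n))" unfolding I_def[symmetric] by simp
    then show ?thesis by (simp add: INF_less_iff)
  qed
  then obtain \<rho>s where \<rho>s: "\<And>n. \<rho>s n \<in> S" "\<And>n. E (\<rho>s n) < I + ennreal (inverse (Suc n))"
    by metis
  have \<rho>s_P1: "\<rho>s n \<in> P1" for n using \<rho>s(1) by (simp add: S_def)
  have E_bound: "E (\<rho>s n) \<le> I + 1" for n
  proof -
    have "I + ennreal (inverse (Suc n)) \<le> I + 1" by (intro add_left_mono) (simp add: field_simps)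
    then show ?thesis by (rule order_trans[OF less_imp_le[OF \<rho>s(2)]])
  qed
  obtain \<rho> where \<rho>: "\<rho> \<in> P1" "E \<rho> \<le> limsup (\<lambda>n. E (\<rho>s n))"
    "\<And>\<mu>. \<mu> \<in> P1 \<Longrightarrow> (\<And>n. convex_le \<mu> (\<rho>s n)) \<Longrightarrow> convex_le \<mu> \<rho>"
    by (rule P1_limit_of_bounded_energy[of g \<rho>s "I + 1", OF g \<rho>s_P1 E_bound[unfolded E_def]])
       (use \<open>I < \<infinity>\<close> in \<open>simp_all add: E_def infinity_ennreal_def\<close>)
  have "(\<lambda>n. I + ennreal (inverse (Suc n))) \<longlonglongrightarrow> I + ennreal 0"
    by (intro tendsto_add tendsto_const tendsto_ennrealI LIMSEQ_inverse_real_of_nat)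
  then have "limsup (\<lambda>n. I + ennreal (inverse (Suc n))) = I"
    using lim_imp_Limsup[OF trivial_limit_sequentially] by simp
  moreover have "limsup (\<lambda>n. E (\<rho>s n)) \<le> limsup (\<lambda>n. I + ennreal (inverse (Suc n)))"
    using \<rho>s(2) by (intro Limsup_mono always_eventually allI less_imp_le)
  ultimately have "E \<rho> \<le> I" using \<rho>(2) by simp
  moreover have "\<rho> \<in> S" using \<rho>(1,3) \<rho>s(1) \<open>\<M> \<subseteq> P1\<close> unfolding S_def by blast
  moreover have "I \<le> E \<rho>" unfolding I_def using \<open>\<rho> \<in> S\<close> by (rule INF_lower)
  ultimately have "E \<rho> = I" by simp
  then show thesis using \<open>\<rho> \<in> S\<close> that unfolding E_def I_def by blast
qed

lemma eint_eq_energy_minus_const: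
  fixes f :: "'a::euclidean_space \<Rightarrow> ereal"
  assumes f: "lsc f" "superlinear f" "\<forall>x. f x \<noteq> -\<infinity>"
  obtains g C where "lsc g" "superlinear g" "\<And>x. ereal (norm x) \<le> g x"
    "\<And>\<rho>. \<rho> \<in> P1 \<Longrightarrow> eint \<rho> f = enn2ereal (\<integral>\<^sup>+x. e2ennreal (g x) \<partial>\<rho>) - ereal C"
proof -
  obtain C where C: "0 \<le> C" "\<And>x. ereal (norm x - C) \<le> f x"
    using lsc_superlinear_ge_norm_minus_const[OF f] by blast
  define g where "g x = f x + ereal C" for x
  show thesis
  proof (rule that[of g C])
    show "lsc g" unfolding g_def using lsc_add_continuous[OF f(1) continuous_on_const] .
    show "superlinear g" using superlinear_mono[OF f(2)] C(1) by (simp add: g_def ereal_le_add_self)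
    show "ereal (norm x) \<le> g x" for x using C(2)[of x] by (cases "f x") (auto simp: g_def)
    have "ereal (- C) \<le> f x" for x using order_trans[OF _ C(2)[of x]] by simp
    then show "eint \<rho> f = enn2ereal (\<integral>\<^sup>+x. e2ennreal (g x) \<partial>\<rho>) - ereal C" if "\<rho> \<in> P1" for \<rho>
      unfolding g_def using borel_measurable_P1[OF that borel_measurable_lsc[OF f(1)]]
      by (intro eint_eq_nn_integral_add_const P1D(2)[OF that])
  qed
qed

theorem corollary4p4:
  fixes \<mu> \<nu> :: "('a::euclidean_space) measure" and f :: "'a \<Rightarrow> ereal"
  assumes "\<mu> \<in> P1" and "\<nu> \<in> P1"
    and "barycentre \<mu> = barycentre \<nu>"
    and "\<forall>x. f x \<noteq> -\<infinity>"
    and "ereal_convex f" and "lsc f" and "superlinear f"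
    and "(INF \<rho> \<in> {\<rho> \<in> P1. convex_le \<mu> \<rho> \<and> convex_le \<nu> \<rho>}. eint \<rho> f) < \<infinity>"
  shows "\<exists>\<rho>\<in>{\<rho> \<in> P1. convex_le \<mu> \<rho> \<and> convex_le \<nu> \<rho>}.
           eint \<rho> f = (INF \<rho> \<in> {\<rho> \<in> P1. convex_le \<mu> \<rho> \<and> convex_le \<nu> \<rho>}. eint \<rho> f)"
proof -
  obtain g C where g: "lsc g" "superlinear g" "\<And>x. ereal (norm x) \<le> g x"
    and eint_f: "\<And>\<rho>. \<rho> \<in> P1 \<Longrightarrow> eint \<rho> f = enn2ereal (\<integral>\<^sup>+x. e2ennreal (g x) \<partial>\<rho>) - ereal C"
    using eint_eq_energy_minus_const[OF assms(6,7,4)] by blast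
  define S where "S = {\<rho> \<in> P1. \<forall>\<mu>'\<in>{\<mu>, \<nu>}. convex_le \<mu>' \<rho>}"
  have S: "{\<rho> \<in> P1. convex_le \<mu> \<rho> \<and> convex_le \<nu> \<rho>} = S" unfolding S_def by auto
  obtain \<rho>0 where "\<rho>0 \<in> S" "eint \<rho>0 f < \<infinity>" using assms(8) unfolding S INF_less_iff by blast
  then have "(\<integral>\<^sup>+x. e2ennreal (g x) \<partial>\<rho>0) \<noteq> \<infinity>"
    using eint_f[of \<rho>0] by (auto simp: S_def)
  then have "(INF \<rho>\<in>S. \<integral>\<^sup>+x. e2ennreal (g x) \<partial>\<rho>) < \<infinity>"
    using \<open>\<rho>0 \<in> S\<close> by (intro le_less_trans[OF INF_lower]) (auto simp: less_top)
  then obtain \<rho> where \<rho>: "\<rho> \<in> S"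
    "(\<integral>\<^sup>+x. e2ennreal (g x) \<partial>\<rho>) = (INF \<rho>\<in>S. \<integral>\<^sup>+x. e2ennreal (g x) \<partial>\<rho>)"
    using nn_integral_min_on_convex_upper_bounds[OF g, of "{\<mu>, \<nu>}"] assms(1,2) unfolding S_def by blast
  have "eint \<rho> f \<le> eint \<rho>' f" if "\<rho>' \<in> S" for \<rho>'
    using \<rho> that INF_lower[OF that, of "\<lambda>\<rho>. \<integral>\<^sup>+x. e2ennreal (g x) \<partial>\<rho>"]
    by (simp add: eint_f S_def ereal_minus_mono less_eq_ennreal.rep_eq)
  then have "eint \<rho> f = (INF \<rho>'\<in>S. eint \<rho>' f)" using \<rho>(1) by (intro antisym INF_greatest INF_lower)
  then show ?thesis using \<rho>(1) unfolding S by blast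
qed

end
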